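(* In the setting of the context, let $\tilde\rho_\alpha>\rho_\alpha$ be the number satisfying $\{(c^2\gamma+b^2e^{-2\tilde\rho_\alpha\delta})(2\tilde\rho_\alpha)^{-\alpha}+|b|(1+e^{-\tilde\rho_\alpha\delta})\}\tilde\rho_\alpha^{-\alpha}=\frac12$. Then for any $\mu>\tilde\rho_\alpha$ and $\lambda\ge2\mu$: (i) $k_\lambda$ is a Fredholm kernel of type $L^{2,-\mu}$ on $[0,\infty)$; (ii) there exists a unique Fredholm resolvent $r_\lambda$ of type $L^{2,-\mu}$ of $k_\lambda$ on $[0,\infty)$, i.e. a unique Fredholm kernel $r_\lambda$ of type $L^{2,-\mu}$ on $[0,\infty)$ with $r_\lambda(t,s)+\int_0^\infty k_\lambda(t,\theta)r_\lambda(\theta,s)d\theta=r_\lambda(t,s)+\int_0^\infty r_\lambda(t,\theta)k_\lambda(\theta,s)d\theta=k_\lambda(t,s)$ for a.e. $t,s\ge0$; (iii) for every $a\in L^{2,-\mu}(0,\infty;\mathbb{R})$, the equation $x(t)+\int_0^\infty k_\lambda(t,s)x(s)ds=a(t)$, $t\ge0$, has a unique solution $x\in L^{2,-\mu}(0,\infty;\mathbb{R})$, given by $x(t)=a(t)-\int_0^\infty r_\lambda(t,s)a(s)ds$ for a.e. $t\ge0$.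
   Context: Constants: $b\in\mathbb{R}$, $c\in\mathbb{R}\setminus\{0\}$, $\gamma>0$, $\alpha\in(\frac12,1]$, $\delta\ge0$, $\lambda>0$. $\rho_\alpha:=0$ if $b=0$; if $b\neq0$, $\rho_\alpha>0$ satisfies $|b|(1+e^{-\rho_\alpha\delta})\rho_\alpha^{-\alpha}=1$. $g_\lambda(\tau):=\frac{c^2\gamma+b^2e^{-\lambda\delta}}{\Gamma(\alpha)^2}\int_0^\infty e^{-\lambda\theta}\theta^{\alpha-1}(\theta+\tau)^{\alpha-1}d\theta-\frac{b}{\Gamma(\alpha)}(\tau-\delta)_+^{\alpha-1}$, $\tau\ge0$, with $x_+^{\alpha-1}:=x^{\alpha-1}\mathbf{1}_{(0,\infty)}(x)$; $k_\lambda(t,s):=g_\lambda(t-s)$ for $0\le s\le t$, $k_\lambda(t,s):=e^{-\lambda(s-t)}g_\lambda(s-t)$ for $0\le t\le s$. $L^{p,\beta}(0,\infty;\mathbb{R})$: measurable $f$ with $\int_0^\infty e^{p\beta t}|f(t)|^pdt<\infty$; $L^p=L^{p,0}$. For $p,q\in[1,\infty]$ with $\frac1p+\frac1q=1$, a measurable $k:[0,\infty)^2\to\mathbb{R}$ is a Fredholm kernel of type $L^p$ on $[0,\infty)$ if $\sup\int_0^\infty\int_0^\infty|g(t)k(t,s)f(s)|dsdt<\infty$, the supremum over $\|g\|_{L^q}\le1$, $\|f\|_{L^p}\le1$; for $\eta\in\mathbb{R}$, $k$ is a Fredholm kernel of type $L^{p,\eta}$ if $(t,s)\mapsto e^{\eta(t-s)}k(t,s)$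 is a Fredholm kernel of type $L^p$. *)

theory Defs
  imports "HOL-Analysis.Analysis"
begin

definition M0 :: "real measure" where
  "M0 = restrict_space lborel {0..}"

definition pospow :: "real \<Rightarrow> real \<Rightarrow> real" where
  "pospow x a = (if x > 0 then x powr a else 0)"

definition rho_alpha :: "real \<Rightarrow> real \<Rightarrow> real \<Rightarrow> real" where
  "rho_alpha b alpha delta =
     (if b = 0 then 0
      else (THE r. r > 0 \<and> \<bar>b\<bar> * (1 + exp (- r * delta)) * r powr (- alpha) = 1))"

definition g_lam :: "real \<Rightarrow> real \<Rightarrow> real \<Rightarrow> real \<Rightarrow> real \<Rightarrow> real \<Rightarrow> real \<Rightarrow> real" where
  "g_lam b c gamma alpha delta lam tau =
     (c^2 * gamma + b^2 * exp (- lam * delta)) / (Gamma alpha)^2 *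
       (LINT \<theta>:{0<..}|lborel. exp (- lam * \<theta>) * \<theta> powr (alpha - 1) * (\<theta> + tau) powr (alpha - 1))
     - b / Gamma alpha * pospow (tau - delta) (alpha - 1)"

definition k_lam :: "real \<Rightarrow> real \<Rightarrow> real \<Rightarrow> real \<Rightarrow> real \<Rightarrow> real \<Rightarrow> real \<Rightarrow> real \<Rightarrow> real" where
  "k_lam b c gamma alpha delta lam t s =
     (if s \<le> t then g_lam b c gamma alpha delta lam (t - s)
      else exp (- lam * (s - t)) * g_lam b c gamma alpha delta lam (s - t))"

definition Lpw :: "real \<Rightarrow> real \<Rightarrow> (real \<Rightarrow> real) \<Rightarrow> bool" where
  "Lpw p beta f \<longleftrightarrow> f \<in> borel_measurable M0 \<and>
     (\<integral>\<^sup>+ t. ennreal (exp (p * beta * t) * \<bar>f t\<bar> powr p) \<partial>M0) < \<infinity>"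

definition fredholm_L2 :: "(real \<Rightarrow> real \<Rightarrow> real) \<Rightarrow> bool" where
  "fredholm_L2 k \<longleftrightarrow>
     (\<lambda>z. k (fst z) (snd z)) \<in> borel_measurable (M0 \<Otimes>\<^sub>M M0) \<and>
     (SUP fg \<in> {(f, g). f \<in> borel_measurable M0 \<and> g \<in> borel_measurable M0 \<and>
                   (\<integral>\<^sup>+ s. ennreal (\<bar>f s\<bar> powr 2) \<partial>M0) \<le> 1 \<and>
                   (\<integral>\<^sup>+ t. ennreal (\<bar>g t\<bar> powr 2) \<partial>M0) \<le> 1}.
        \<integral>\<^sup>+ t. \<integral>\<^sup>+ s. ennreal \<bar>snd fg t * k t s * fst fg s\<bar> \<partial>M0 \<partial>M0) < \<infinity>"

definition fredholm_L2w :: "real \<Rightarrow> (real \<Rightarrow> real \<Rightarrow> real) \<Rightarrow> bool" where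
  "fredholm_L2w eta k \<longleftrightarrow> fredholm_L2 (\<lambda>t s. exp (eta * (t - s)) * k t s)"

definition fredholm_resolvent_L2w :: "real \<Rightarrow> (real \<Rightarrow> real \<Rightarrow> real) \<Rightarrow> (real \<Rightarrow> real \<Rightarrow> real) \<Rightarrow> bool" where
  "fredholm_resolvent_L2w eta k r \<longleftrightarrow> fredholm_L2w eta r \<and>
     (AE z in M0 \<Otimes>\<^sub>M M0.
        integrable M0 (\<lambda>\<theta>. k (fst z) \<theta> * r \<theta> (snd z)) \<and>
        integrable M0 (\<lambda>\<theta>. r (fst z) \<theta> * k \<theta> (snd z)) \<and>
        r (fst z) (snd z) + (\<integral>\<theta>. k (fst z) \<theta> * r \<theta> (snd z) \<partial>M0) = k (fst z) (snd z) \<and>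
        r (fst z) (snd z) + (\<integral>\<theta>. r (fst z) \<theta> * k \<theta> (snd z) \<partial>M0) = k (fst z) (snd z))"

definition solves_fredholm :: "(real \<Rightarrow> real \<Rightarrow> real) \<Rightarrow> (real \<Rightarrow> real) \<Rightarrow> (real \<Rightarrow> real) \<Rightarrow> bool" where
  "solves_fredholm k a x \<longleftrightarrow>
     (AE t in M0. integrable M0 (\<lambda>s. k t s * x s) \<and> x t + (\<integral>s. k t s * x s \<partial>M0) = a t)"

end

theory Submission
  imports Defs
begin

(*
  Multiplying by the weight exp (- mu t) turns the problem on L^{2,-mu} into the same problem on
  L^2(0,oo) for the kernel K(t,s) = exp (- mu (t - s)) k_lam(t,s).  As lam >= 2 mu, |K(t,s)| is
  dominated by Phi(t - s) for some Phi in L^1 and L^2 of the real line with integral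
  q = 2 ((c^2 gamma + b^2 exp (- lam delta)) lam^(-alpha) + |b| exp (- mu delta)) mu^(-alpha),
  and the equation defining rt together with mu > rt gives q < 1.  Hence all rows and columns of
  K have L^1-norm at most q (so K is a Fredholm kernel by the Schur test) and squared L^2-norm at
  most P = ||Phi||^2.  Then the iterated kernels K_n, n >= 2, are bounded by P q^(n-2), so the
  Neumann series R = K - K_2 + K_3 - ... converges pointwise to a kernel with
  R + K R = R + R K = K whose rows and columns have L^1-norm at most q / (1 - q).  Applying R to
  x + K x = a gives x = a - R a, and applying R to the resolvent identity of a second Fredholm
  resolvent R' gives R' = R; there the Fubini steps are justified almost everywhere by the
  Fredholm property of R'.
*)

lemma space_M0 [simp]: "space M0 = {0..}"
  by (simp add: M0_def space_restrict_space)

lemma sigma_finite_measure_M0: "sigma_finite_measure M0"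
  unfolding M0_def
  by (rule sigma_finite_measure_restrict_space) (auto simp: lborel.sigma_finite_measure_axioms)

interpretation M0: sigma_finite_measure M0
  by (rule sigma_finite_measure_M0)

interpretation M0M0: pair_sigma_finite M0 M0
  by unfold_locales

lemma measurable_ident_M0: "(\<lambda>x. x) \<in> borel_measurable M0"
  unfolding M0_def by (rule measurable_restrict_space1) simp

lemma measurable_fst_M0 [measurable]: "fst \<in> borel_measurable (M0 \<Otimes>\<^sub>M M0)"
  using measurable_compose[OF measurable_fst[of M0 M0] measurable_ident_M0] by simp

lemma measurable_snd_M0 [measurable]: "snd \<in> borel_measurable (M0 \<Otimes>\<^sub>M M0)"
  using measurable_compose[OF measurable_snd[of M0 M0] measurable_ident_M0] by simp

lemma nn_integral_M0: "(\<integral>\<^sup>+x. f x \<partial>M0) = (\<integral>\<^sup>+x. f x * indicator {0..} x \<partial>lborel)"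
  unfolding M0_def by (rule nn_integral_restrict_space) simp

lemma abs_mult_le_half_sq: "\<bar>u * v\<bar> \<le> 1/2 * u\<^sup>2 + 1/2 * v\<^sup>2" for u v :: real
proof -
  have "0 \<le> (\<bar>u\<bar> - \<bar>v\<bar>)\<^sup>2" by simp
  then show ?thesis by (simp add: power2_eq_square abs_mult algebra_simps)
qed

lemma power2_add_le: "(x + y)\<^sup>2 \<le> 2 * x\<^sup>2 + 2 * y\<^sup>2" for x y :: real
proof -
  have "0 \<le> (x - y)\<^sup>2" by simp
  then show ?thesis by (simp add: power2_eq_square algebra_simps)
qed

lemma abs_powr_2: "\<bar>x\<bar> powr 2 = x\<^sup>2" for x :: real
  by (cases "x = 0") (auto simp: powr_realpow[of "\<bar>x\<bar>" 2, simplified])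

lemma ennreal_abs_integral_le: "ennreal \<bar>integral\<^sup>L M f\<bar> \<le> (\<integral>\<^sup>+x. ennreal \<bar>f x :: real\<bar> \<partial>M)"
  using integral_norm_bound_ennreal[of M f]
  by (cases "integrable M f") (auto simp: not_integrable_integral_eq)

lemma abs_integral_le_nn_integral_bound:
  assumes "(\<integral>\<^sup>+x. ennreal \<bar>f x\<bar> \<partial>M) \<le> ennreal B" "B \<ge> 0"
  shows "\<bar>\<integral>x. f x \<partial>M\<bar> \<le> B"
  using order.trans[OF ennreal_abs_integral_le assms(1)] assms(2) by (simp add: ennreal_le_iff)

lemma integral_abs_le_nn_integral_bound:
  fixes f :: "'a \<Rightarrow> real"
  assumes "integrable M f" "(\<integral>\<^sup>+x. ennreal \<bar>f x\<bar> \<partial>M) \<le> ennreal B" "B \<ge> 0"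
  shows "(\<integral>x. \<bar>f x\<bar> \<partial>M) \<le> B"
proof -
  have "ennreal (\<integral>x. \<bar>f x\<bar> \<partial>M) = (\<integral>\<^sup>+x. ennreal \<bar>f x\<bar> \<partial>M)"
    using assms by (intro nn_integral_eq_integral[symmetric]) auto
  with assms(2,3) show ?thesis by (metis ennreal_le_iff)
qed

lemma integrable_nn_integral_bound:
  fixes f :: "'a \<Rightarrow> real"
  assumes "f \<in> borel_measurable M" "(\<integral>\<^sup>+x. ennreal \<bar>f x\<bar> \<partial>M) \<le> ennreal B"
  shows "integrable M f"
proof -
  have "(\<integral>\<^sup>+x. ennreal \<bar>f x\<bar> \<partial>M) < \<infinity>"
    using assms(2) by (rule le_less_trans) simp
  with assms(1) show ?thesis
    by (simp add: integrable_iff_bounded)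
qed

lemma integrable_mult_bounded:
  fixes f g :: "'a \<Rightarrow> real"
  assumes f: "integrable M f" and [measurable]: "g \<in> borel_measurable M"
    and g: "\<And>x. x \<in> space M \<Longrightarrow> \<bar>g x\<bar> \<le> B"
  shows "integrable M (\<lambda>x. f x * g x)"
proof -
  have "integrable M (\<lambda>x. f x * B)"
    using f by simp
  moreover have "(\<lambda>x. f x * g x) \<in> borel_measurable M"
    using borel_measurable_integrable[OF f] by measurable
  moreover have "AE x in M. norm (f x * g x) \<le> norm (f x * B)"
  proof (rule AE_I2)
    fix x
    assume "x \<in> space M"
    then have "\<bar>g x\<bar> \<le> \<bar>B\<bar>"
      using g by fastforce
    then show "norm (f x * g x) \<le> norm (f x * B)"
      by (simp add: abs_mult mult_left_mono)
  qed
  ultimately show ?thesis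
    by (rule Bochner_Integration.integrable_bound)
qed

lemma nn_integral_abs_mult_le:
  fixes u v :: "'a \<Rightarrow> real"
  assumes [measurable]: "u \<in> borel_measurable M" "v \<in> borel_measurable M"
    and X: "(\<integral>\<^sup>+x. ennreal ((u x)\<^sup>2) \<partial>M) \<le> ennreal X"
    and Y: "(\<integral>\<^sup>+x. ennreal ((v x)\<^sup>2) \<partial>M) \<le> ennreal Y" and "X \<ge> 0" "Y \<ge> 0"
  shows "(\<integral>\<^sup>+x. ennreal \<bar>u x * v x\<bar> \<partial>M) \<le> ennreal ((X + Y) / 2)"
proof -
  have "(\<integral>\<^sup>+x. ennreal \<bar>u x * v x\<bar> \<partial>M)
      \<le> (\<integral>\<^sup>+x. ennreal (1/2) * ennreal ((u x)\<^sup>2) + ennreal (1/2) * ennreal ((v x)\<^sup>2) \<partial>M)"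
  proof (rule nn_integral_mono)
    fix x
    have "ennreal \<bar>u x * v x\<bar> \<le> ennreal (1/2 * (u x)\<^sup>2 + 1/2 * (v x)\<^sup>2)"
      by (rule ennreal_leI) (rule abs_mult_le_half_sq)
    then show "ennreal \<bar>u x * v x\<bar> \<le> ennreal (1/2) * ennreal ((u x)\<^sup>2) + ennreal (1/2) * ennreal ((v x)\<^sup>2)"
      by (simp add: ennreal_plus[symmetric] ennreal_mult[symmetric] del: ennreal_plus ennreal_half)
  qed
  also have "\<dots> = ennreal (1/2) * (\<integral>\<^sup>+x. ennreal ((u x)\<^sup>2) \<partial>M) + ennreal (1/2) * (\<integral>\<^sup>+x. ennreal ((v x)\<^sup>2) \<partial>M)"
    by (simp add: nn_integral_add nn_integral_cmult del: ennreal_half)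
  also have "\<dots> \<le> ennreal (1/2) * ennreal X + ennreal (1/2) * ennreal Y"
    by (intro add_mono mult_left_mono X Y) auto
  also have "\<dots> = ennreal ((X + Y) / 2)"
    using assms(5,6)
    by (simp add: ennreal_plus[symmetric] ennreal_mult[symmetric] del: ennreal_plus ennreal_half add_divide_distrib)
  finally show ?thesis .
qed

lemma nn_integral_power2_diff_finite:
  fixes u v :: "real \<Rightarrow> real"
  assumes [measurable]: "u \<in> borel_measurable M" "v \<in> borel_measurable M"
    and "(\<integral>\<^sup>+t. ennreal ((u t)\<^sup>2) \<partial>M) < \<infinity>" "(\<integral>\<^sup>+t. ennreal ((v t)\<^sup>2) \<partial>M) < \<infinity>"
  shows "(\<integral>\<^sup>+t. ennreal ((u t - v t)\<^sup>2) \<partial>M) < \<infinity>"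
proof -
  have "(\<integral>\<^sup>+t. ennreal ((u t - v t)\<^sup>2) \<partial>M)
      \<le> (\<integral>\<^sup>+t. ennreal 2 * ennreal ((u t)\<^sup>2) + ennreal 2 * ennreal ((v t)\<^sup>2) \<partial>M)"
  proof (rule nn_integral_mono)
    fix t
    have "ennreal ((u t - v t)\<^sup>2) \<le> ennreal (2 * (u t)\<^sup>2 + 2 * (- v t)\<^sup>2)"
      by (rule ennreal_leI) (use power2_add_le[of "u t" "- v t"] in simp)
    then show "ennreal ((u t - v t)\<^sup>2) \<le> ennreal 2 * ennreal ((u t)\<^sup>2) + ennreal 2 * ennreal ((v t)\<^sup>2)"
      by (subst (asm) ennreal_plus) (auto simp: ennreal_mult)
  qed
  also have "\<dots> = ennreal 2 * (\<integral>\<^sup>+t. ennreal ((u t)\<^sup>2) \<partial>M) + ennreal 2 * (\<integral>\<^sup>+t. ennreal ((v t)\<^sup>2) \<partial>M)"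
    by (subst nn_integral_add) (auto simp: nn_integral_cmult)
  also have "\<dots> < \<infinity>"
    using assms(3,4) by (simp add: ennreal_mult_less_top)
  finally show ?thesis .
qed

lemma integral_suminf_geometric:
  fixes f :: "nat \<Rightarrow> 'a \<Rightarrow> real"
  assumes integrable: "\<And>n. integrable M (f n)"
    and pointwise: "AE x in M. \<forall>n. \<bar>f n x\<bar> \<le> c x * q ^ n"
    and integral: "\<And>n. (\<integral>x. \<bar>f n x\<bar> \<partial>M) \<le> C * q ^ n"
    and "0 \<le> q" "q < 1"
  shows "integrable M (\<lambda>x. \<Sum>n. f n x)" and "(\<integral>x. (\<Sum>n. f n x) \<partial>M) = (\<Sum>n. \<integral>x. f n x \<partial>M)"
proof -
  have "summable (\<lambda>n. q ^ n)"
    using assms(4,5) by (simp add: summable_geometric)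
  have "AE x in M. summable (\<lambda>n. norm (f n x))"
    using pointwise
  proof eventually_elim
    case (elim x)
    show ?case
      by (rule summable_comparison_test[OF _ summable_mult[OF \<open>summable (\<lambda>n. q ^ n)\<close>, of "c x"]])
        (use elim in auto)
  qed
  moreover have "summable (\<lambda>n. \<integral>x. norm (f n x) \<partial>M)"
  proof (rule summable_comparison_test[OF _ summable_mult[OF \<open>summable (\<lambda>n. q ^ n)\<close>, of C]])
    have "\<bar>\<integral>x. \<bar>f n x\<bar> \<partial>M\<bar> \<le> C * q ^ n" for n
      using integral[of n] integral_nonneg_AE[of "\<lambda>x. \<bar>f n x\<bar>" M] by simp
    then show "\<exists>N. \<forall>n\<ge>N. norm (\<integral>x. norm (f n x) \<partial>M) \<le> C * q ^ n"
      by auto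
  qed
  ultimately show "integrable M (\<lambda>x. \<Sum>n. f n x)" "(\<integral>x. (\<Sum>n. f n x) \<partial>M) = (\<Sum>n. \<integral>x. f n x \<partial>M)"
    using integrable_suminf integral_suminf integrable by blast+
qed

lemma Lpw_2_0_iff: "Lpw 2 0 f \<longleftrightarrow> f \<in> borel_measurable M0 \<and> (\<integral>\<^sup>+t. ennreal ((f t)\<^sup>2) \<partial>M0) < \<infinity>"
  by (simp add: Lpw_def abs_powr_2)

lemma measurable_pospow [measurable]:
  assumes [measurable]: "f \<in> borel_measurable M"
  shows "(\<lambda>x. pospow (f x) a) \<in> borel_measurable M"
  unfolding pospow_def by measurable

lemma pospow_nonneg: "pospow x a \<ge> 0"
  by (simp add: pospow_def)

lemma nn_integral_exp_pospow:
  fixes m a d :: real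
  assumes m: "m > 0" and a: "a > 0" and d: "d \<ge> 0"
  shows "(\<integral>\<^sup>+x. ennreal (exp (- m * x) * pospow (x - d) (a - 1)) \<partial>lborel)
    = ennreal (exp (- m * d) * Gamma a * m powr (- a))"
proof -
  define f where "f x = ennreal (exp (- m * x) * pospow (x - d) (a - 1))" for x
  have [measurable]: "f \<in> borel_measurable borel"
    unfolding f_def pospow_def by measurable
  have "(\<integral>\<^sup>+x. f x \<partial>lborel) = \<bar>1/m\<bar> * (\<integral>\<^sup>+x. f (d + (1/m) * x) \<partial>lborel)"
    by (rule nn_integral_real_affine) (use m in auto)
  also have "(\<integral>\<^sup>+x. f (d + (1/m) * x) \<partial>lborel)
      = (\<integral>\<^sup>+x. ennreal (exp (- m * d) * m powr (1 - a)) * ennreal (indicator {0..} x * x powr (a - 1) / exp x) \<partial>lborel)"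
  proof (rule nn_integral_cong)
    fix x :: real
    show "f (d + (1/m) * x)
      = ennreal (exp (- m * d) * m powr (1 - a)) * ennreal (indicator {0..} x * x powr (a - 1) / exp x)"
    proof (cases "x > 0")
      case True
      have "pospow (d + 1 / m * x - d) (a - 1) = x powr (a - 1) / m powr (a - 1)"
        using True m by (simp add: pospow_def powr_divide)
      also have "\<dots> = x powr (a - 1) * m powr (1 - a)"
        using powr_minus[of m "a - 1"] by (simp add: divide_inverse)
      finally have pp: "pospow (d + 1 / m * x - d) (a - 1) = x powr (a - 1) * m powr (1 - a)" .
      have "- m * (d + 1 / m * x) = - m * d - x"
        using m by (simp add: algebra_simps)
      then have ee: "exp (- m * (d + 1 / m * x)) = exp (- m * d) / exp x"
        by (simp add: exp_diff)
      show ?thesis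
        using True m unfolding f_def pp ee by (simp add: ennreal_mult[symmetric] field_simps)
    next
      case False
      then have "\<not> x / m > 0"
        using m by (simp add: zero_less_divide_iff)
      then show ?thesis
        unfolding f_def using m False by (auto simp: pospow_def indicator_def)
    qed
  qed
  also have "\<dots> = ennreal (exp (- m * d) * m powr (1 - a)) * ennreal (Gamma a)"
    by (subst nn_integral_cmult) (auto simp: Gamma_conv_nn_integral_real[OF a])
  finally have "(\<integral>\<^sup>+x. f x \<partial>lborel) = ennreal (1/m) * (ennreal (exp (- m * d) * m powr (1 - a)) * ennreal (Gamma a))"
    using m by simp
  also have "\<dots> = ennreal (exp (- m * d) * Gamma a * m powr (- a))"
  proof -
    have "1/m * (exp (- m * d) * m powr (1 - a) * Gamma a) = exp (- m * d) * Gamma a * m powr (- a)"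
      using m by (simp add: powr_diff powr_minus field_simps)
    then show ?thesis
      using m a by (simp add: ennreal_mult[symmetric] Gamma_real_pos less_imp_le)
  qed
  finally show ?thesis unfolding f_def .
qed

lemma nn_integral_exp_neg_power2_M0: "(\<integral>\<^sup>+t. ennreal ((exp (- t))\<^sup>2) \<partial>M0) < \<infinity>"
proof -
  have "(\<integral>\<^sup>+t. ennreal ((exp (- t))\<^sup>2) \<partial>M0) = (\<integral>\<^sup>+t. ennreal ((exp (- t))\<^sup>2) * indicator {0..} t \<partial>lborel)"
    by (rule nn_integral_M0)
  also have "\<dots> \<le> (\<integral>\<^sup>+t. ennreal (exp (- 2 * t) * pospow (t - 0) (1 - 1)) \<partial>lborel)"
    using AE_lborel_singleton[of 0]
  proof (rule nn_integral_mono_AE[OF eventually_mono])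
    fix t :: real
    assume "t \<noteq> 0"
    moreover have "(exp (- t))\<^sup>2 = exp (- 2 * t)"
      by (simp add: power2_eq_square exp_add[symmetric])
    ultimately show "ennreal ((exp (- t))\<^sup>2) * indicator {0..} t \<le> ennreal (exp (- 2 * t) * pospow (t - 0) (1 - 1))"
      by (simp add: pospow_def indicator_def)
  qed
  also have "\<dots> = ennreal (exp (- 2 * 0) * Gamma 1 * 2 powr (- 1))"
    by (rule nn_integral_exp_pospow) auto
  also have "\<dots> < \<infinity>"
    unfolding infinity_ennreal_def by (rule ennreal_less_top)
  finally show ?thesis .
qed

section \<open>Integral kernels on the half line\<close>

definition kernel_measurable :: "(real \<Rightarrow> real \<Rightarrow> real) \<Rightarrow> bool" where
  "kernel_measurable K \<longleftrightarrow> (\<lambda>z. K (fst z) (snd z)) \<in> borel_measurable (M0 \<Otimes>\<^sub>M M0)"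

lemma kernel_measurable_comp:
  assumes "kernel_measurable K" "f \<in> measurable N M0" "g \<in> measurable N M0"
  shows "(\<lambda>x. K (f x) (g x)) \<in> borel_measurable N"
proof -
  have "(\<lambda>x. (f x, g x)) \<in> measurable N (M0 \<Otimes>\<^sub>M M0)"
    using assms by measurable
  from measurable_compose[OF this assms(1)[unfolded kernel_measurable_def]] show ?thesis
    by simp
qed

lemma kernel_measurable_row: "kernel_measurable K \<Longrightarrow> t \<ge> 0 \<Longrightarrow> (\<lambda>\<theta>. K t \<theta>) \<in> borel_measurable M0"
  by (rule kernel_measurable_comp) auto

lemma kernel_measurable_col: "kernel_measurable K \<Longrightarrow> s \<ge> 0 \<Longrightarrow> (\<lambda>\<theta>. K \<theta> s) \<in> borel_measurable M0"
  by (rule kernel_measurable_comp) auto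

lemma kernel_measurable_swap: "kernel_measurable K \<Longrightarrow> kernel_measurable (\<lambda>t s. K s t)"
proof -
  assume K: "kernel_measurable K"
  have "(\<lambda>z. (snd z, fst z)) \<in> measurable (M0 \<Otimes>\<^sub>M M0) (M0 \<Otimes>\<^sub>M M0)"
    by measurable
  from measurable_compose[OF this K[unfolded kernel_measurable_def]] show ?thesis
    by (simp add: kernel_measurable_def)
qed

lemma kernel_measurable_compose:
  assumes "kernel_measurable K" "kernel_measurable L"
  shows "kernel_measurable (\<lambda>t s. \<integral>\<theta>. K t \<theta> * L \<theta> s \<partial>M0)"
proof -
  have "(\<lambda>(z, \<theta>). K (fst z) \<theta> * L \<theta> (snd z)) \<in> borel_measurable ((M0 \<Otimes>\<^sub>M M0) \<Otimes>\<^sub>M M0)"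
    unfolding split_beta'
    by (intro borel_measurable_times kernel_measurable_comp[OF assms(1)]
        kernel_measurable_comp[OF assms(2)]) measurable
  then show ?thesis
    unfolding kernel_measurable_def by (rule M0.borel_measurable_lebesgue_integral)
qed

lemma fredholm_L2_kernel_measurable: "fredholm_L2 K \<Longrightarrow> kernel_measurable K"
  by (simp add: fredholm_L2_def kernel_measurable_def)

lemma nn_integral_kernel_row_le:
  fixes h :: "real \<Rightarrow> ennreal"
  assumes L: "kernel_measurable L"
    and row: "\<And>t. t \<ge> 0 \<Longrightarrow> (\<integral>\<^sup>+s. ennreal \<bar>L t s\<bar> \<partial>M0) \<le> ennreal a"
    and [measurable]: "h \<in> borel_measurable M0"
  shows "(\<integral>\<^sup>+t. \<integral>\<^sup>+s. ennreal \<bar>L t s\<bar> * h t \<partial>M0 \<partial>M0) \<le> ennreal a * (\<integral>\<^sup>+t. h t \<partial>M0)"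
proof -
  have "(\<integral>\<^sup>+t. \<integral>\<^sup>+s. ennreal \<bar>L t s\<bar> * h t \<partial>M0 \<partial>M0) = (\<integral>\<^sup>+t. (\<integral>\<^sup>+s. ennreal \<bar>L t s\<bar> \<partial>M0) * h t \<partial>M0)"
    by (intro nn_integral_cong nn_integral_multc)
      (auto intro!: measurable_compose[OF _ measurable_ennreal] borel_measurable_abs kernel_measurable_row[OF L])
  also have "\<dots> \<le> (\<integral>\<^sup>+t. ennreal a * h t \<partial>M0)"
    by (intro nn_integral_mono mult_right_mono row) auto
  also have "\<dots> = ennreal a * (\<integral>\<^sup>+t. h t \<partial>M0)"
    by (rule nn_integral_cmult) measurable
  finally show ?thesis .
qed

lemma nn_integral_kernel_col_le:
  fixes h :: "real \<Rightarrow> ennreal"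
  assumes L: "kernel_measurable L"
    and col: "\<And>s. s \<ge> 0 \<Longrightarrow> (\<integral>\<^sup>+t. ennreal \<bar>L t s\<bar> \<partial>M0) \<le> ennreal b"
    and [measurable]: "h \<in> borel_measurable M0"
  shows "(\<integral>\<^sup>+t. \<integral>\<^sup>+s. ennreal \<bar>L t s\<bar> * h s \<partial>M0 \<partial>M0) \<le> ennreal b * (\<integral>\<^sup>+s. h s \<partial>M0)"
proof -
  have [measurable]: "(\<lambda>z. L (fst z) (snd z)) \<in> borel_measurable (M0 \<Otimes>\<^sub>M M0)"
    "(\<lambda>z. L (snd z) (fst z)) \<in> borel_measurable (M0 \<Otimes>\<^sub>M M0)"
    using L kernel_measurable_swap[OF L] by (simp_all add: kernel_measurable_def)
  have "(\<integral>\<^sup>+t. \<integral>\<^sup>+s. ennreal \<bar>L t s\<bar> * h s \<partial>M0 \<partial>M0) = (\<integral>\<^sup>+s. \<integral>\<^sup>+t. ennreal \<bar>L t s\<bar> * h s \<partial>M0 \<partial>M0)"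
    by (rule M0M0.Fubini') measurable
  also have "\<dots> \<le> ennreal b * (\<integral>\<^sup>+s. h s \<partial>M0)"
    by (rule nn_integral_kernel_row_le[OF kernel_measurable_swap[OF L] col]) measurable
  finally show ?thesis .
qed

lemma nn_integral_kernel_power2_le:
  fixes h :: "real \<Rightarrow> ennreal"
  assumes L: "kernel_measurable L" and "a \<ge> 0" "b \<ge> 0"
    and row: "\<And>t. t \<ge> 0 \<Longrightarrow> (\<integral>\<^sup>+s. ennreal \<bar>L t s\<bar> \<partial>M0) \<le> ennreal a"
    and col: "\<And>s. s \<ge> 0 \<Longrightarrow> (\<integral>\<^sup>+t. ennreal \<bar>L t s\<bar> \<partial>M0) \<le> ennreal b"
    and [measurable]: "h \<in> borel_measurable M0"
  shows "(\<integral>\<^sup>+t. (\<integral>\<^sup>+s. ennreal \<bar>L t s\<bar> * h s \<partial>M0)\<^sup>2 \<partial>M0) \<le> ennreal (a * b) * (\<integral>\<^sup>+s. (h s)\<^sup>2 \<partial>M0)"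
proof -
  have Cauchy_Schwarz:
    "(\<integral>\<^sup>+s. ennreal \<bar>L t s\<bar> * h s \<partial>M0)\<^sup>2 \<le> ennreal a * (\<integral>\<^sup>+s. ennreal \<bar>L t s\<bar> * (h s)\<^sup>2 \<partial>M0)"
    if t: "t \<ge> 0" for t
  proof -
    have [measurable]: "(\<lambda>s. L t s) \<in> borel_measurable M0"
      using kernel_measurable_row[OF L t] .
    have sqrt_sq: "(ennreal (sqrt \<bar>L t s\<bar>))\<^sup>2 = ennreal \<bar>L t s\<bar>" for s
      by (simp add: ennreal_power)
    have "(\<integral>\<^sup>+s. ennreal \<bar>L t s\<bar> * h s \<partial>M0)\<^sup>2
        = (\<integral>\<^sup>+s. ennreal (sqrt \<bar>L t s\<bar>) * (ennreal (sqrt \<bar>L t s\<bar>) * h s) \<partial>M0)\<^sup>2"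
      by (simp add: mult.assoc[symmetric] ennreal_mult[symmetric])
    also have "\<dots> \<le> (\<integral>\<^sup>+s. (ennreal (sqrt \<bar>L t s\<bar>))\<^sup>2 \<partial>M0) * (\<integral>\<^sup>+s. (ennreal (sqrt \<bar>L t s\<bar>) * h s)\<^sup>2 \<partial>M0)"
      by (rule Cauchy_Schwarz_nn_integral) measurable
    also have "\<dots> = (\<integral>\<^sup>+s. ennreal \<bar>L t s\<bar> \<partial>M0) * (\<integral>\<^sup>+s. ennreal \<bar>L t s\<bar> * (h s)\<^sup>2 \<partial>M0)"
      by (simp only: sqrt_sq power_mult_distrib)
    also have "\<dots> \<le> ennreal a * (\<integral>\<^sup>+s. ennreal \<bar>L t s\<bar> * (h s)\<^sup>2 \<partial>M0)"
      by (intro mult_right_mono row t) auto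
    finally show ?thesis .
  qed
  have "(\<integral>\<^sup>+t. (\<integral>\<^sup>+s. ennreal \<bar>L t s\<bar> * h s \<partial>M0)\<^sup>2 \<partial>M0)
      \<le> (\<integral>\<^sup>+t. ennreal a * (\<integral>\<^sup>+s. ennreal \<bar>L t s\<bar> * (h s)\<^sup>2 \<partial>M0) \<partial>M0)"
    by (intro nn_integral_mono Cauchy_Schwarz) auto
  also have "\<dots> = ennreal a * (\<integral>\<^sup>+t. \<integral>\<^sup>+s. ennreal \<bar>L t s\<bar> * (h s)\<^sup>2 \<partial>M0 \<partial>M0)"
    using L by (intro nn_integral_cmult) (simp add: kernel_measurable_def)
  also have "\<dots> \<le> ennreal a * (ennreal b * (\<integral>\<^sup>+s. (h s)\<^sup>2 \<partial>M0))"
    by (intro mult_left_mono nn_integral_kernel_col_le[OF L col]) auto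
  finally show ?thesis
    using assms(2,3) by (simp add: ennreal_mult mult.assoc)
qed

lemma ennreal_abs_mult3_le:
  fixes x y z :: real
  shows "ennreal \<bar>x * y * z\<bar>
    \<le> ennreal (1/2) * (ennreal \<bar>y\<bar> * ennreal (x\<^sup>2)) + ennreal (1/2) * (ennreal \<bar>y\<bar> * ennreal (z\<^sup>2))"
proof -
  have "\<bar>x * y * z\<bar> \<le> \<bar>y\<bar> * (1/2 * x\<^sup>2 + 1/2 * z\<^sup>2)"
    using mult_left_mono[OF abs_mult_le_half_sq[of x z], of "\<bar>y\<bar>"] by (simp add: abs_mult mult_ac)
  then have "ennreal \<bar>x * y * z\<bar> \<le> ennreal (1/2 * (\<bar>y\<bar> * x\<^sup>2) + 1/2 * (\<bar>y\<bar> * z\<^sup>2))"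
    by (intro ennreal_leI) (simp add: algebra_simps)
  then show ?thesis
    by (simp add: ennreal_mult[symmetric] ennreal_plus[symmetric] del: ennreal_half ennreal_plus)
qed

lemma nn_integral_kernel_bilinear_le:
  fixes f g :: "real \<Rightarrow> real"
  assumes L: "kernel_measurable L" and "a \<ge> 0"
    and row: "\<And>t. t \<ge> 0 \<Longrightarrow> (\<integral>\<^sup>+s. ennreal \<bar>L t s\<bar> \<partial>M0) \<le> ennreal a"
    and col: "\<And>s. s \<ge> 0 \<Longrightarrow> (\<integral>\<^sup>+t. ennreal \<bar>L t s\<bar> \<partial>M0) \<le> ennreal a"
    and [measurable]: "f \<in> borel_measurable M0" "g \<in> borel_measurable M0"
  shows "(\<integral>\<^sup>+t. \<integral>\<^sup>+s. ennreal \<bar>g t * L t s * f s\<bar> \<partial>M0 \<partial>M0)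
    \<le> ennreal (a / 2) * (\<integral>\<^sup>+t. ennreal ((g t)\<^sup>2) \<partial>M0) + ennreal (a / 2) * (\<integral>\<^sup>+s. ennreal ((f s)\<^sup>2) \<partial>M0)"
proof -
  have [measurable]: "(\<lambda>z. L (fst z) (snd z)) \<in> borel_measurable (M0 \<Otimes>\<^sub>M M0)"
    using L by (simp add: kernel_measurable_def)
  have "ennreal \<bar>g t * L t s * f s\<bar>
      \<le> ennreal (1/2) * (ennreal \<bar>L t s\<bar> * ennreal ((g t)\<^sup>2)) + ennreal (1/2) * (ennreal \<bar>L t s\<bar> * ennreal ((f s)\<^sup>2))"
    for t s
    using ennreal_abs_mult3_le[of "g t" "L t s" "f s"] by (simp add: mult_ac)
  then have "(\<integral>\<^sup>+t. \<integral>\<^sup>+s. ennreal \<bar>g t * L t s * f s\<bar> \<partial>M0 \<partial>M0)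
      \<le> (\<integral>\<^sup>+t. \<integral>\<^sup>+s. ennreal (1/2) * (ennreal \<bar>L t s\<bar> * ennreal ((g t)\<^sup>2))
          + ennreal (1/2) * (ennreal \<bar>L t s\<bar> * ennreal ((f s)\<^sup>2)) \<partial>M0 \<partial>M0)"
    by (intro nn_integral_mono)
  also have "\<dots> = (\<integral>\<^sup>+t. ennreal (1/2) * (\<integral>\<^sup>+s. ennreal \<bar>L t s\<bar> * ennreal ((g t)\<^sup>2) \<partial>M0)
      + ennreal (1/2) * (\<integral>\<^sup>+s. ennreal \<bar>L t s\<bar> * ennreal ((f s)\<^sup>2) \<partial>M0) \<partial>M0)"
  proof (rule nn_integral_cong)
    fix t
    assume "t \<in> space M0"
    then have [measurable]: "(\<lambda>s. L t s) \<in> borel_measurable M0"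
      by (intro kernel_measurable_row[OF L]) auto
    show "(\<integral>\<^sup>+s. ennreal (1/2) * (ennreal \<bar>L t s\<bar> * ennreal ((g t)\<^sup>2))
        + ennreal (1/2) * (ennreal \<bar>L t s\<bar> * ennreal ((f s)\<^sup>2)) \<partial>M0)
      = ennreal (1/2) * (\<integral>\<^sup>+s. ennreal \<bar>L t s\<bar> * ennreal ((g t)\<^sup>2) \<partial>M0)
        + ennreal (1/2) * (\<integral>\<^sup>+s. ennreal \<bar>L t s\<bar> * ennreal ((f s)\<^sup>2) \<partial>M0)"
      by (simp add: nn_integral_add nn_integral_cmult del: ennreal_half)
  qed
  also have "\<dots> = ennreal (1/2) * (\<integral>\<^sup>+t. \<integral>\<^sup>+s. ennreal \<bar>L t s\<bar> * ennreal ((g t)\<^sup>2) \<partial>M0 \<partial>M0)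
      + ennreal (1/2) * (\<integral>\<^sup>+t. \<integral>\<^sup>+s. ennreal \<bar>L t s\<bar> * ennreal ((f s)\<^sup>2) \<partial>M0 \<partial>M0)"
    by (simp add: nn_integral_add nn_integral_cmult del: ennreal_half)
  also have "\<dots> \<le> ennreal (1/2) * (ennreal a * (\<integral>\<^sup>+t. ennreal ((g t)\<^sup>2) \<partial>M0))
      + ennreal (1/2) * (ennreal a * (\<integral>\<^sup>+s. ennreal ((f s)\<^sup>2) \<partial>M0))"
    by (intro add_mono mult_left_mono nn_integral_kernel_row_le[OF L row]
        nn_integral_kernel_col_le[OF L col]) auto
  finally show ?thesis
    using \<open>a \<ge> 0\<close> by (simp add: ennreal_mult[symmetric] mult.assoc[symmetric] del: ennreal_half)
qed

lemma fredholm_L2I: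
  assumes L: "kernel_measurable L" and "a \<ge> 0"
    and row: "\<And>t. t \<ge> 0 \<Longrightarrow> (\<integral>\<^sup>+s. ennreal \<bar>L t s\<bar> \<partial>M0) \<le> ennreal a"
    and col: "\<And>s. s \<ge> 0 \<Longrightarrow> (\<integral>\<^sup>+t. ennreal \<bar>L t s\<bar> \<partial>M0) \<le> ennreal a"
  shows "fredholm_L2 L"
proof -
  have "(\<integral>\<^sup>+ t. \<integral>\<^sup>+ s. ennreal \<bar>g t * L t s * f s\<bar> \<partial>M0 \<partial>M0) \<le> ennreal a"
    if "f \<in> borel_measurable M0" "g \<in> borel_measurable M0"
      and f: "(\<integral>\<^sup>+ s. ennreal (\<bar>f s\<bar> powr 2) \<partial>M0) \<le> 1"
      and g: "(\<integral>\<^sup>+ t. ennreal (\<bar>g t\<bar> powr 2) \<partial>M0) \<le> 1" for f g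
  proof -
    note nn_integral_kernel_bilinear_le[OF L \<open>a \<ge> 0\<close> row col that(1,2)]
    also have "ennreal (a / 2) * (\<integral>\<^sup>+t. ennreal ((g t)\<^sup>2) \<partial>M0) + ennreal (a / 2) * (\<integral>\<^sup>+s. ennreal ((f s)\<^sup>2) \<partial>M0)
        \<le> ennreal (a / 2) * 1 + ennreal (a / 2) * 1"
      using f g by (intro add_mono mult_left_mono) (auto simp: abs_powr_2)
    also have "\<dots> = ennreal a"
      using \<open>a \<ge> 0\<close> by (simp add: ennreal_plus[symmetric] del: ennreal_plus)
    finally show ?thesis .
  qed
  then have "(SUP fg \<in> {(f, g). f \<in> borel_measurable M0 \<and> g \<in> borel_measurable M0 \<and>
                   (\<integral>\<^sup>+ s. ennreal (\<bar>f s\<bar> powr 2) \<partial>M0) \<le> 1 \<and>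
                   (\<integral>\<^sup>+ t. ennreal (\<bar>g t\<bar> powr 2) \<partial>M0) \<le> 1}.
        \<integral>\<^sup>+ t. \<integral>\<^sup>+ s. ennreal \<bar>snd fg t * L t s * fst fg s\<bar> \<partial>M0 \<partial>M0) \<le> ennreal a"
    by (intro SUP_least) auto
  with L show ?thesis
    unfolding fredholm_L2_def kernel_measurable_def by (auto intro: le_less_trans[OF _ ennreal_less_top])
qed

lemma nn_integral_power2_normalize:
  fixes u :: "'a \<Rightarrow> real"
  assumes [measurable]: "u \<in> borel_measurable M" and "(\<integral>\<^sup>+s. ennreal ((u s)\<^sup>2) \<partial>M) < \<infinity>"
  obtains c where "c > 0" "(\<integral>\<^sup>+s. ennreal (\<bar>u s / c\<bar> powr 2) \<partial>M) \<le> 1"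
proof -
  obtain A where A: "(\<integral>\<^sup>+s. ennreal ((u s)\<^sup>2) \<partial>M) = ennreal A" "A \<ge> 0"
    using assms(2) less_top_ennreal by auto
  define c where "c = sqrt A + 1"
  have "c > 0"
    using A(2) unfolding c_def by (simp add: add_nonneg_pos)
  have "A \<le> c\<^sup>2"
    using A(2) unfolding c_def by (simp add: power2_eq_square algebra_simps)
  have "(\<integral>\<^sup>+s. ennreal (\<bar>u s / c\<bar> powr 2) \<partial>M) = (\<integral>\<^sup>+s. ennreal ((u s)\<^sup>2) * ennreal (1 / c\<^sup>2) \<partial>M)"
    by (intro nn_integral_cong) (simp add: abs_powr_2 ennreal_mult[symmetric] power_divide)
  also have "\<dots> = ennreal (A / c\<^sup>2)"
    using A by (subst nn_integral_multc) (auto simp: ennreal_mult[symmetric])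
  also have "\<dots> \<le> 1"
    using \<open>c > 0\<close> \<open>A \<le> c\<^sup>2\<close> by simp
  finally show ?thesis
    using \<open>c > 0\<close> that by blast
qed

lemma fredholm_L2_nn_integral_finite:
  fixes f g :: "real \<Rightarrow> real"
  assumes L: "fredholm_L2 L"
    and [measurable]: "f \<in> borel_measurable M0" "g \<in> borel_measurable M0"
    and f: "(\<integral>\<^sup>+s. ennreal ((f s)\<^sup>2) \<partial>M0) < \<infinity>" and g: "(\<integral>\<^sup>+s. ennreal ((g s)\<^sup>2) \<partial>M0) < \<infinity>"
  shows "(\<integral>\<^sup>+t. \<integral>\<^sup>+s. ennreal \<bar>g t * L t s * f s\<bar> \<partial>M0 \<partial>M0) < \<infinity>"
proof -
  have [measurable]: "(\<lambda>z. L (fst z) (snd z)) \<in> borel_measurable (M0 \<Otimes>\<^sub>M M0)"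
    using L by (simp add: fredholm_L2_def)
  obtain cf where cf: "cf > 0" "(\<integral>\<^sup>+s. ennreal (\<bar>f s / cf\<bar> powr 2) \<partial>M0) \<le> 1"
    using nn_integral_power2_normalize[of f M0] f by auto
  obtain cg where cg: "cg > 0" "(\<integral>\<^sup>+s. ennreal (\<bar>g s / cg\<bar> powr 2) \<partial>M0) \<le> 1"
    using nn_integral_power2_normalize[of g M0] g by auto
  define SP where "SP = (SUP fg \<in> {(f, g). f \<in> borel_measurable M0 \<and> g \<in> borel_measurable M0 \<and>
                   (\<integral>\<^sup>+ s. ennreal (\<bar>f s\<bar> powr 2) \<partial>M0) \<le> 1 \<and>
                   (\<integral>\<^sup>+ t. ennreal (\<bar>g t\<bar> powr 2) \<partial>M0) \<le> 1}.
        \<integral>\<^sup>+ t. \<integral>\<^sup>+ s. ennreal \<bar>snd fg t * L t s * fst fg s\<bar> \<partial>M0 \<partial>M0)"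
  have "SP < \<infinity>"
    using L unfolding fredholm_L2_def SP_def by blast
  have normalized: "(\<integral>\<^sup>+t. \<integral>\<^sup>+s. ennreal \<bar>g t / cg * L t s * (f s / cf)\<bar> \<partial>M0 \<partial>M0) \<le> SP"
    unfolding SP_def
    by (rule SUP_upper2[of "(\<lambda>s. f s / cf, \<lambda>t. g t / cg)"]) (use cf cg in \<open>auto simp: power_divide\<close>)
  have "(\<integral>\<^sup>+t. \<integral>\<^sup>+s. ennreal \<bar>g t * L t s * f s\<bar> \<partial>M0 \<partial>M0)
      = (\<integral>\<^sup>+t. ennreal (cg * cf) * \<integral>\<^sup>+s. ennreal \<bar>g t / cg * L t s * (f s / cf)\<bar> \<partial>M0 \<partial>M0)"
  proof (intro nn_integral_cong)
    fix t
    assume "t \<in> space M0"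
    then have [measurable]: "(\<lambda>s. L t s) \<in> borel_measurable M0"
      by (intro kernel_measurable_row fredholm_L2_kernel_measurable[OF L]) auto
    have "(\<integral>\<^sup>+s. ennreal \<bar>g t * L t s * f s\<bar> \<partial>M0)
        = (\<integral>\<^sup>+s. ennreal (cg * cf) * ennreal \<bar>g t / cg * L t s * (f s / cf)\<bar> \<partial>M0)"
      using cf cg by (intro nn_integral_cong) (simp add: ennreal_mult[symmetric] abs_mult)
    also have "\<dots> = ennreal (cg * cf) * \<integral>\<^sup>+s. ennreal \<bar>g t / cg * L t s * (f s / cf)\<bar> \<partial>M0"
      by (rule nn_integral_cmult) measurable
    finally show "(\<integral>\<^sup>+s. ennreal \<bar>g t * L t s * f s\<bar> \<partial>M0)
      = ennreal (cg * cf) * \<integral>\<^sup>+s. ennreal \<bar>g t / cg * L t s * (f s / cf)\<bar> \<partial>M0" .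
  qed
  also have "\<dots> = ennreal (cg * cf) * (\<integral>\<^sup>+t. \<integral>\<^sup>+s. ennreal \<bar>g t / cg * L t s * (f s / cf)\<bar> \<partial>M0 \<partial>M0)"
    by (rule nn_integral_cmult) measurable
  also have "\<dots> < \<infinity>"
    using normalized \<open>SP < \<infinity>\<close> by (simp add: ennreal_mult_less_top le_less_trans)
  finally show ?thesis .
qed

lemma AE_AE_less_top_if_weighted_nn_integral_finite:
  fixes w :: "real \<Rightarrow> real" and I :: "real \<Rightarrow> real \<Rightarrow> ennreal"
  assumes [measurable]: "(\<lambda>z. I (fst z) (snd z)) \<in> borel_measurable (M0 \<Otimes>\<^sub>M M0)" "w \<in> borel_measurable M0"
    and w: "\<And>t. w t > 0"
    and finite: "(\<integral>\<^sup>+t. \<integral>\<^sup>+s. ennreal (w t) * ennreal (w s) * I t s \<partial>M0 \<partial>M0) < \<infinity>"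
  shows "AE t in M0. AE s in M0. I t s < \<infinity>"
proof -
  have "AE t in M0. (\<integral>\<^sup>+s. ennreal (w t) * ennreal (w s) * I t s \<partial>M0) \<noteq> \<infinity>"
    by (rule nn_integral_PInf_AE) (use finite in \<open>auto simp: less_top\<close>)
  then show ?thesis
  proof (rule AE_mp[OF _ AE_I2], intro impI)
    fix t
    assume t: "t \<in> space M0" and fin: "(\<integral>\<^sup>+s. ennreal (w t) * ennreal (w s) * I t s \<partial>M0) \<noteq> \<infinity>"
    have "(\<lambda>s. (t, s)) \<in> measurable M0 (M0 \<Otimes>\<^sub>M M0)"
      using t by (intro measurable_Pair) auto
    from measurable_compose[OF this assms(1)] have [measurable]: "(\<lambda>s. I t s) \<in> borel_measurable M0"
      by simp
    have "AE s in M0. ennreal (w t) * ennreal (w s) * I t s \<noteq> \<infinity>"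
      by (rule nn_integral_PInf_AE) (use fin in auto)
    then show "AE s in M0. I t s < \<infinity>"
    proof eventually_elim
      case (elim s)
      then show ?case
        using w[of t] w[of s] by (auto simp: ennreal_mult_eq_top_iff less_top)
    qed
  qed
qed

lemma nn_integral_kernel_compose_reorder:
  fixes u v :: "real \<Rightarrow> ennreal"
  assumes L: "kernel_measurable L" and R: "kernel_measurable R"
    and [measurable]: "u \<in> borel_measurable M0" "v \<in> borel_measurable M0"
  shows "(\<integral>\<^sup>+\<theta>. \<integral>\<^sup>+s. (\<integral>\<^sup>+t. ennreal \<bar>L t \<theta>\<bar> * u t \<partial>M0) * (ennreal \<bar>R \<theta> s\<bar> * v s) \<partial>M0 \<partial>M0)
    = (\<integral>\<^sup>+t. \<integral>\<^sup>+s. u t * v s * (\<integral>\<^sup>+\<theta>. ennreal \<bar>L t \<theta>\<bar> * ennreal \<bar>R \<theta> s\<bar> \<partial>M0) \<partial>M0 \<partial>M0)"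
proof -
  have [measurable]: "(\<lambda>z. L (fst z) (snd z)) \<in> borel_measurable (M0 \<Otimes>\<^sub>M M0)"
    "(\<lambda>z. R (fst z) (snd z)) \<in> borel_measurable (M0 \<Otimes>\<^sub>M M0)"
    using L R by (simp_all add: kernel_measurable_def)
  have [measurable]: "(\<lambda>x. L (snd (fst x)) (fst (fst x))) \<in> borel_measurable ((M0 \<Otimes>\<^sub>M M0) \<Otimes>\<^sub>M M0)"
    "(\<lambda>x. R (fst (fst x)) (snd x)) \<in> borel_measurable ((M0 \<Otimes>\<^sub>M M0) \<Otimes>\<^sub>M M0)"
    "(\<lambda>x. L (fst (fst x)) (snd x)) \<in> borel_measurable ((M0 \<Otimes>\<^sub>M M0) \<Otimes>\<^sub>M M0)"
    "(\<lambda>x. R (snd x) (snd (fst x))) \<in> borel_measurable ((M0 \<Otimes>\<^sub>M M0) \<Otimes>\<^sub>M M0)"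
    by (intro kernel_measurable_comp[OF L] kernel_measurable_comp[OF R]; measurable)+
  define F where "F t \<theta> s = ennreal \<bar>L t \<theta>\<bar> * u t * (ennreal \<bar>R \<theta> s\<bar> * v s)" for t \<theta> s
  have [measurable]: "(\<lambda>(t, \<theta>). \<integral>\<^sup>+s. F \<theta> t s \<partial>M0) \<in> borel_measurable (M0 \<Otimes>\<^sub>M M0)"
    unfolding F_def split_beta' by measurable
  have "(\<integral>\<^sup>+\<theta>. \<integral>\<^sup>+s. (\<integral>\<^sup>+t. ennreal \<bar>L t \<theta>\<bar> * u t \<partial>M0) * (ennreal \<bar>R \<theta> s\<bar> * v s) \<partial>M0 \<partial>M0)
      = (\<integral>\<^sup>+\<theta>. \<integral>\<^sup>+s. \<integral>\<^sup>+t. F t \<theta> s \<partial>M0 \<partial>M0 \<partial>M0)"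
  proof (intro nn_integral_cong)
    fix \<theta> s
    assume "\<theta> \<in> space M0"
    then have [measurable]: "(\<lambda>t. L t \<theta>) \<in> borel_measurable M0"
      by (auto intro: kernel_measurable_col[OF L])
    show "(\<integral>\<^sup>+t. ennreal \<bar>L t \<theta>\<bar> * u t \<partial>M0) * (ennreal \<bar>R \<theta> s\<bar> * v s) = (\<integral>\<^sup>+t. F t \<theta> s \<partial>M0)"
      unfolding F_def by (rule nn_integral_multc[symmetric]) measurable
  qed
  also have "\<dots> = (\<integral>\<^sup>+\<theta>. \<integral>\<^sup>+t. \<integral>\<^sup>+s. F t \<theta> s \<partial>M0 \<partial>M0 \<partial>M0)"
  proof (rule nn_integral_cong)
    fix \<theta>
    assume "\<theta> \<in> space M0"
    then have [measurable]: "(\<lambda>t. L t \<theta>) \<in> borel_measurable M0" "(\<lambda>s. R \<theta> s) \<in> borel_measurable M0"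
      by (auto intro: kernel_measurable_col[OF L] kernel_measurable_row[OF R])
    show "(\<integral>\<^sup>+s. \<integral>\<^sup>+t. F t \<theta> s \<partial>M0 \<partial>M0) = (\<integral>\<^sup>+t. \<integral>\<^sup>+s. F t \<theta> s \<partial>M0 \<partial>M0)"
      unfolding F_def by (rule M0M0.Fubini') measurable
  qed
  also have "\<dots> = (\<integral>\<^sup>+t. \<integral>\<^sup>+\<theta>. \<integral>\<^sup>+s. F t \<theta> s \<partial>M0 \<partial>M0 \<partial>M0)"
    by (rule M0M0.Fubini'[symmetric]) measurable
  also have "\<dots> = (\<integral>\<^sup>+t. \<integral>\<^sup>+s. \<integral>\<^sup>+\<theta>. F t \<theta> s \<partial>M0 \<partial>M0 \<partial>M0)"
  proof (rule nn_integral_cong)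
    fix t
    assume "t \<in> space M0"
    then have [measurable]: "(\<lambda>\<theta>. L t \<theta>) \<in> borel_measurable M0"
      by (auto intro: kernel_measurable_row[OF L])
    show "(\<integral>\<^sup>+\<theta>. \<integral>\<^sup>+s. F t \<theta> s \<partial>M0 \<partial>M0) = (\<integral>\<^sup>+s. \<integral>\<^sup>+\<theta>. F t \<theta> s \<partial>M0 \<partial>M0)"
      unfolding F_def by (rule M0M0.Fubini'[symmetric]) measurable
  qed
  also have "\<dots> = (\<integral>\<^sup>+t. \<integral>\<^sup>+s. u t * v s * (\<integral>\<^sup>+\<theta>. ennreal \<bar>L t \<theta>\<bar> * ennreal \<bar>R \<theta> s\<bar> \<partial>M0) \<partial>M0 \<partial>M0)"
  proof (intro nn_integral_cong)
    fix t s
    assume "t \<in> space M0" "s \<in> space M0"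
    then have [measurable]: "(\<lambda>\<theta>. L t \<theta>) \<in> borel_measurable M0" "(\<lambda>\<theta>. R \<theta> s) \<in> borel_measurable M0"
      by (auto intro: kernel_measurable_row[OF L] kernel_measurable_col[OF R])
    have "(\<integral>\<^sup>+\<theta>. F t \<theta> s \<partial>M0) = (\<integral>\<^sup>+\<theta>. u t * v s * (ennreal \<bar>L t \<theta>\<bar> * ennreal \<bar>R \<theta> s\<bar>) \<partial>M0)"
      unfolding F_def by (intro nn_integral_cong) (simp add: mult_ac)
    also have "\<dots> = u t * v s * (\<integral>\<^sup>+\<theta>. ennreal \<bar>L t \<theta>\<bar> * ennreal \<bar>R \<theta> s\<bar> \<partial>M0)"
      by (rule nn_integral_cmult) measurable
    finally show "(\<integral>\<^sup>+\<theta>. F t \<theta> s \<partial>M0) = u t * v s * (\<integral>\<^sup>+\<theta>. ennreal \<bar>L t \<theta>\<bar> * ennreal \<bar>R \<theta> s\<bar> \<partial>M0)" .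
  qed
  finally show ?thesis .
qed

lemma kernel_exp_weighted_col_integral:
  assumes L: "kernel_measurable L" and "a \<ge> 0" "b \<ge> 0"
    and row: "\<And>t. t \<ge> 0 \<Longrightarrow> (\<integral>\<^sup>+s. ennreal \<bar>L t s\<bar> \<partial>M0) \<le> ennreal a"
    and col: "\<And>s. s \<ge> 0 \<Longrightarrow> (\<integral>\<^sup>+t. ennreal \<bar>L t s\<bar> \<partial>M0) \<le> ennreal b"
  obtains g :: "real \<Rightarrow> real"
  where "g \<in> borel_measurable M0" "\<And>\<theta>. g \<theta> \<ge> 0" "(\<integral>\<^sup>+\<theta>. ennreal ((g \<theta>)\<^sup>2) \<partial>M0) < \<infinity>"
    "\<And>\<theta>. \<theta> \<ge> 0 \<Longrightarrow> ennreal (g \<theta>) = (\<integral>\<^sup>+t. ennreal \<bar>L t \<theta>\<bar> * ennreal (exp (- t)) \<partial>M0)"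
proof -
  note [measurable] = measurable_ident_M0
  have [measurable]: "(\<lambda>z. L (snd z) (fst z)) \<in> borel_measurable (M0 \<Otimes>\<^sub>M M0)"
    using kernel_measurable_swap[OF L] by (simp add: kernel_measurable_def)
  define G where "G \<theta> = (\<integral>\<^sup>+t. ennreal \<bar>L t \<theta>\<bar> * ennreal (exp (- t)) \<partial>M0)" for \<theta>
  have G_le: "G \<theta> \<le> (\<integral>\<^sup>+t. ennreal \<bar>L t \<theta>\<bar> \<partial>M0)" for \<theta>
    unfolding G_def
  proof (intro nn_integral_mono)
    fix t
    assume "t \<in> space M0"
    then have "ennreal (exp (- t)) \<le> 1"
      by (simp add: ennreal_le_1)
    then show "ennreal \<bar>L t \<theta>\<bar> * ennreal (exp (- t)) \<le> ennreal \<bar>L t \<theta>\<bar>"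
      using mult_left_mono[of "ennreal (exp (- t))" 1 "ennreal \<bar>L t \<theta>\<bar>"] by simp
  qed
  have G_finite: "G \<theta> < \<infinity>" if "\<theta> \<ge> 0" for \<theta>
    using order.trans[OF G_le col[OF that]] by (rule le_less_trans) simp
  have "(\<integral>\<^sup>+\<theta>. (G \<theta>)\<^sup>2 \<partial>M0) \<le> ennreal (b * a) * (\<integral>\<^sup>+t. (ennreal (exp (- t)))\<^sup>2 \<partial>M0)"
    unfolding G_def
    using nn_integral_kernel_power2_le[OF kernel_measurable_swap[OF L] \<open>b \<ge> 0\<close> \<open>a \<ge> 0\<close> col row]
    by simp
  also have "\<dots> < \<infinity>"
    using nn_integral_exp_neg_power2_M0 by (simp add: ennreal_power ennreal_mult_less_top)
  finally have G_L2: "(\<integral>\<^sup>+\<theta>. (G \<theta>)\<^sup>2 \<partial>M0) < \<infinity>" .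
  define g where "g \<theta> = enn2real (G \<theta>)" for \<theta>
  have g_G: "ennreal (g \<theta>) = G \<theta>" if "\<theta> \<ge> 0" for \<theta>
    unfolding g_def using G_finite[OF that] by (simp add: ennreal_enn2real less_top)
  have g_nonneg: "g \<theta> \<ge> 0" for \<theta>
    unfolding g_def by simp
  have "g \<in> borel_measurable M0"
    unfolding g_def G_def by measurable
  moreover have "(\<integral>\<^sup>+\<theta>. ennreal ((g \<theta>)\<^sup>2) \<partial>M0) = (\<integral>\<^sup>+\<theta>. (G \<theta>)\<^sup>2 \<partial>M0)"
    by (intro nn_integral_cong) (simp add: g_G[symmetric] ennreal_power g_nonneg)
  ultimately show ?thesis
    using that[of g] g_nonneg g_G G_L2 unfolding G_def by simp
qed

(* The Fredholm bound for R, tested with the square integrable functions g and exp (- s), controls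
   an exponentially weighted double integral of the composition |L| |R|. *)
lemma fredholm_L2_AE_AE_compose_finite:
  assumes F: "fredholm_L2 R" and L: "kernel_measurable L" and "a \<ge> 0" "b \<ge> 0"
    and row: "\<And>t. t \<ge> 0 \<Longrightarrow> (\<integral>\<^sup>+s. ennreal \<bar>L t s\<bar> \<partial>M0) \<le> ennreal a"
    and col: "\<And>s. s \<ge> 0 \<Longrightarrow> (\<integral>\<^sup>+t. ennreal \<bar>L t s\<bar> \<partial>M0) \<le> ennreal b"
  shows "AE t in M0. AE s in M0. (\<integral>\<^sup>+\<theta>. ennreal \<bar>L t \<theta>\<bar> * ennreal \<bar>R \<theta> s\<bar> \<partial>M0) < \<infinity>"
proof -
  note [measurable] = measurable_ident_M0
  have R: "kernel_measurable R"
    using F by (rule fredholm_L2_kernel_measurable)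
  have [measurable]: "(\<lambda>x. L (fst (fst x)) (snd x)) \<in> borel_measurable ((M0 \<Otimes>\<^sub>M M0) \<Otimes>\<^sub>M M0)"
    "(\<lambda>x. R (snd x) (snd (fst x))) \<in> borel_measurable ((M0 \<Otimes>\<^sub>M M0) \<Otimes>\<^sub>M M0)"
    by (intro kernel_measurable_comp[OF L] kernel_measurable_comp[OF R]; measurable)+
  obtain g where [measurable]: "g \<in> borel_measurable M0" and g_nonneg: "\<And>\<theta>. g \<theta> \<ge> 0"
    and "(\<integral>\<^sup>+\<theta>. ennreal ((g \<theta>)\<^sup>2) \<partial>M0) < \<infinity>"
    and g: "\<And>\<theta>. \<theta> \<ge> 0 \<Longrightarrow> ennreal (g \<theta>) = (\<integral>\<^sup>+t. ennreal \<bar>L t \<theta>\<bar> * ennreal (exp (- t)) \<partial>M0)"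
    using kernel_exp_weighted_col_integral[OF L \<open>a \<ge> 0\<close> \<open>b \<ge> 0\<close> row col] by blast
  then have "(\<integral>\<^sup>+\<theta>. \<integral>\<^sup>+s. ennreal \<bar>g \<theta> * R \<theta> s * exp (- s)\<bar> \<partial>M0 \<partial>M0) < \<infinity>"
    using nn_integral_exp_neg_power2_M0 by (intro fredholm_L2_nn_integral_finite[OF F]) auto
  also have "(\<integral>\<^sup>+\<theta>. \<integral>\<^sup>+s. ennreal \<bar>g \<theta> * R \<theta> s * exp (- s)\<bar> \<partial>M0 \<partial>M0)
      = (\<integral>\<^sup>+\<theta>. \<integral>\<^sup>+s. (\<integral>\<^sup>+t. ennreal \<bar>L t \<theta>\<bar> * ennreal (exp (- t)) \<partial>M0) *
          (ennreal \<bar>R \<theta> s\<bar> * ennreal (exp (- s))) \<partial>M0 \<partial>M0)"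
  proof (intro nn_integral_cong)
    fix \<theta> s
    assume "\<theta> \<in> space M0"
    then have "\<theta> \<ge> 0"
      by simp
    have "ennreal \<bar>g \<theta> * R \<theta> s * exp (- s)\<bar> = ennreal (g \<theta>) * (ennreal \<bar>R \<theta> s\<bar> * ennreal (exp (- s)))"
      using g_nonneg[of \<theta>] by (simp add: abs_mult ennreal_mult mult.assoc)
    also have "\<dots> = (\<integral>\<^sup>+t. ennreal \<bar>L t \<theta>\<bar> * ennreal (exp (- t)) \<partial>M0) * (ennreal \<bar>R \<theta> s\<bar> * ennreal (exp (- s)))"
      by (simp only: g[OF \<open>\<theta> \<ge> 0\<close>])
    finally show "ennreal \<bar>g \<theta> * R \<theta> s * exp (- s)\<bar>
      = (\<integral>\<^sup>+t. ennreal \<bar>L t \<theta>\<bar> * ennreal (exp (- t)) \<partial>M0) * (ennreal \<bar>R \<theta> s\<bar> * ennreal (exp (- s)))" .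
  qed
  also have "\<dots> = (\<integral>\<^sup>+t. \<integral>\<^sup>+s. ennreal (exp (- t)) * ennreal (exp (- s)) *
      (\<integral>\<^sup>+\<theta>. ennreal \<bar>L t \<theta>\<bar> * ennreal \<bar>R \<theta> s\<bar> \<partial>M0) \<partial>M0 \<partial>M0)"
    by (rule nn_integral_kernel_compose_reorder[OF L R]) measurable
  finally have "(\<integral>\<^sup>+t. \<integral>\<^sup>+s. ennreal (exp (- t)) * ennreal (exp (- s)) *
      (\<integral>\<^sup>+\<theta>. ennreal \<bar>L t \<theta>\<bar> * ennreal \<bar>R \<theta> s\<bar> \<partial>M0) \<partial>M0 \<partial>M0) < \<infinity>" .
  moreover have "(\<lambda>z. \<integral>\<^sup>+\<theta>. ennreal \<bar>L (fst z) \<theta>\<bar> * ennreal \<bar>R \<theta> (snd z)\<bar> \<partial>M0) \<in> borel_measurable (M0 \<Otimes>\<^sub>M M0)"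
    by measurable
  ultimately show ?thesis
    by (intro AE_AE_less_top_if_weighted_nn_integral_finite[where w = "\<lambda>t. exp (- t)"]) auto
qed

lemma integrable_kernel_product:
  assumes L: "kernel_measurable L" and [measurable]: "u \<in> borel_measurable M0" "f \<in> borel_measurable M0"
    and f: "\<And>\<theta>. \<theta> \<ge> 0 \<Longrightarrow> (\<integral>\<^sup>+s. ennreal \<bar>L \<theta> s * f s\<bar> \<partial>M0) \<le> ennreal B"
    and u: "(\<integral>\<^sup>+\<theta>. ennreal \<bar>u \<theta>\<bar> \<partial>M0) \<le> ennreal U"
  shows "integrable (M0 \<Otimes>\<^sub>M M0) (\<lambda>(\<theta>, s). u \<theta> * (L \<theta> s * f s))"
proof -
  have [measurable]: "(\<lambda>z. L (fst z) (snd z)) \<in> borel_measurable (M0 \<Otimes>\<^sub>M M0)"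
    using L by (simp add: kernel_measurable_def)
  have "(\<integral>\<^sup>+z. ennreal \<bar>(\<lambda>(\<theta>, s). u \<theta> * (L \<theta> s * f s)) z\<bar> \<partial>(M0 \<Otimes>\<^sub>M M0))
      = (\<integral>\<^sup>+\<theta>. \<integral>\<^sup>+s. ennreal \<bar>u \<theta>\<bar> * ennreal \<bar>L \<theta> s * f s\<bar> \<partial>M0 \<partial>M0)"
    by (subst M0.nn_integral_fst[symmetric]) (auto simp: abs_mult ennreal_mult intro!: nn_integral_cong)
  also have "\<dots> = (\<integral>\<^sup>+\<theta>. ennreal \<bar>u \<theta>\<bar> * (\<integral>\<^sup>+s. ennreal \<bar>L \<theta> s * f s\<bar> \<partial>M0) \<partial>M0)"
    by (intro nn_integral_cong nn_integral_cmult)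
      (auto intro!: measurable_compose[OF _ measurable_ennreal] borel_measurable_abs
        borel_measurable_times kernel_measurable_row[OF L])
  also have "\<dots> \<le> (\<integral>\<^sup>+\<theta>. ennreal \<bar>u \<theta>\<bar> * ennreal B \<partial>M0)"
    by (intro nn_integral_mono mult_left_mono f) auto
  also have "\<dots> = (\<integral>\<^sup>+\<theta>. ennreal \<bar>u \<theta>\<bar> \<partial>M0) * ennreal B"
    by (rule nn_integral_multc) measurable
  also have "\<dots> \<le> ennreal U * ennreal B"
    by (intro mult_right_mono u) auto
  also have "\<dots> < \<infinity>"
    by (simp add: ennreal_mult_less_top)
  finally show ?thesis
    by (subst integrable_iff_bounded) auto
qed

lemma integral_kernel_assoc:
  assumes L: "kernel_measurable L" and [measurable]: "u \<in> borel_measurable M0" "f \<in> borel_measurable M0"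
    and f: "\<And>\<theta>. \<theta> \<ge> 0 \<Longrightarrow> (\<integral>\<^sup>+s. ennreal \<bar>L \<theta> s * f s\<bar> \<partial>M0) \<le> ennreal B"
    and u: "(\<integral>\<^sup>+\<theta>. ennreal \<bar>u \<theta>\<bar> \<partial>M0) \<le> ennreal U"
  shows "(\<integral>\<theta>. u \<theta> * (\<integral>s. L \<theta> s * f s \<partial>M0) \<partial>M0) = (\<integral>s. (\<integral>\<theta>. u \<theta> * L \<theta> s \<partial>M0) * f s \<partial>M0)"
proof -
  have "(\<integral>\<theta>. u \<theta> * (\<integral>s. L \<theta> s * f s \<partial>M0) \<partial>M0) = (\<integral>\<theta>. (\<integral>s. u \<theta> * (L \<theta> s * f s) \<partial>M0) \<partial>M0)"
    by simp
  also have "\<dots> = (\<integral>s. (\<integral>\<theta>. u \<theta> * (L \<theta> s * f s) \<partial>M0) \<partial>M0)"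
    by (rule M0M0.Fubini_integral[symmetric]) (rule integrable_kernel_product[OF assms])
  also have "\<dots> = (\<integral>s. (\<integral>\<theta>. u \<theta> * L \<theta> s \<partial>M0) * f s \<partial>M0)"
    by (simp only: mult.assoc[symmetric] integral_mult_left_zero)
  finally show ?thesis .
qed

(* Passing through a measurable null set avoids any measurability assumption on P. *)
lemma AE_pair_M0_swap:
  assumes "AE z in M0 \<Otimes>\<^sub>M M0. P (fst z) (snd z)"
  shows "AE s in M0. AE \<theta> in M0. P \<theta> s"
proof -
  from assms obtain N where N: "{z \<in> space (M0 \<Otimes>\<^sub>M M0). \<not> P (fst z) (snd z)} \<subseteq> N"
    "N \<in> sets (M0 \<Otimes>\<^sub>M M0)" "emeasure (M0 \<Otimes>\<^sub>M M0) N = 0"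
    by (rule AE_E)
  have "AE z in M0 \<Otimes>\<^sub>M M0. z \<notin> N"
    using N by (intro AE_not_in) auto
  then have "AE \<theta> in M0. AE s in M0. (\<theta>, s) \<notin> N"
    using M0M0.AE_pair by blast
  moreover have "{z \<in> space (M0 \<Otimes>\<^sub>M M0). (fst z, snd z) \<notin> N} \<in> sets (M0 \<Otimes>\<^sub>M M0)"
    using N(2) by (simp add: Diff_eq[symmetric] set_diff_eq[symmetric] sets.Diff sets.top)
  ultimately have "AE s in M0. AE \<theta> in M0. (\<theta>, s) \<notin> N"
    using M0M0.AE_commute[of "\<lambda>\<theta> s. (\<theta>, s) \<notin> N"] by simp
  then show ?thesis
  proof (rule AE_mp[OF _ AE_I2], intro impI)
    fix s
    assume s: "s \<in> space M0" and not_in_N: "AE \<theta> in M0. (\<theta>, s) \<notin> N"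
    show "AE \<theta> in M0. P \<theta> s"
      using AE_space not_in_N
    proof eventually_elim
      case (elim \<theta>)
      then have in_space: "(\<theta>, s) \<in> space (M0 \<Otimes>\<^sub>M M0)" and "(\<theta>, s) \<notin> N"
        using s by (simp_all add: space_pair_measure)
      with N(1) have "(\<theta>, s) \<notin> {z \<in> space (M0 \<Otimes>\<^sub>M M0). \<not> P (fst z) (snd z)}"
        by blast
      with in_space show ?case
        by simp
    qed
  qed
qed

section \<open>Contraction kernels and their resolvent\<close>

locale contraction_kernel =
  fixes K :: "real \<Rightarrow> real \<Rightarrow> real" and q P :: real
  assumes measurable_K: "kernel_measurable K"
    and q_nonneg: "0 \<le> q" and q_less_1: "q < 1" and P_nonneg: "0 \<le> P"
    and row_L1: "\<And>t. t \<ge> 0 \<Longrightarrow> (\<integral>\<^sup>+\<theta>. ennreal \<bar>K t \<theta>\<bar> \<partial>M0) \<le> ennreal q"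
    and col_L1: "\<And>s. s \<ge> 0 \<Longrightarrow> (\<integral>\<^sup>+\<theta>. ennreal \<bar>K \<theta> s\<bar> \<partial>M0) \<le> ennreal q"
    and row_L2: "\<And>t. t \<ge> 0 \<Longrightarrow> (\<integral>\<^sup>+\<theta>. ennreal ((K t \<theta>)\<^sup>2) \<partial>M0) \<le> ennreal P"
    and col_L2: "\<And>s. s \<ge> 0 \<Longrightarrow> (\<integral>\<^sup>+\<theta>. ennreal ((K \<theta> s)\<^sup>2) \<partial>M0) \<le> ennreal P"
begin

lemma K_pair_measurable [measurable]: "(\<lambda>z. K (fst z) (snd z)) \<in> borel_measurable (M0 \<Otimes>\<^sub>M M0)"
  using measurable_K unfolding kernel_measurable_def .

lemma K_row_measurable: "t \<ge> 0 \<Longrightarrow> (\<lambda>\<theta>. K t \<theta>) \<in> borel_measurable M0"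
  by (rule kernel_measurable_row[OF measurable_K])

lemma K_col_measurable: "s \<ge> 0 \<Longrightarrow> (\<lambda>\<theta>. K \<theta> s) \<in> borel_measurable M0"
  by (rule kernel_measurable_col[OF measurable_K])

lemma nn_integral_K_K_le:
  "t \<ge> 0 \<Longrightarrow> s \<ge> 0 \<Longrightarrow> (\<integral>\<^sup>+\<theta>. ennreal \<bar>K t \<theta> * K \<theta> s\<bar> \<partial>M0) \<le> ennreal P"
  using nn_integral_abs_mult_le[OF K_row_measurable K_col_measurable row_L2 col_L2 P_nonneg P_nonneg]
  by simp

primrec iterated_kernel :: "nat \<Rightarrow> real \<Rightarrow> real \<Rightarrow> real" where
  "iterated_kernel 0 = K"
| "iterated_kernel (Suc n) = (\<lambda>t s. \<integral>\<theta>. K t \<theta> * iterated_kernel n \<theta> s \<partial>M0)"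

declare iterated_kernel.simps(2) [simp del]

lemma kernel_measurable_iterated: "kernel_measurable (iterated_kernel n)"
  by (induction n) (auto intro: kernel_measurable_compose measurable_K simp: iterated_kernel.simps)

lemma iterated_kernel_pair_measurable [measurable]:
  "(\<lambda>z. iterated_kernel n (fst z) (snd z)) \<in> borel_measurable (M0 \<Otimes>\<^sub>M M0)"
  using kernel_measurable_iterated unfolding kernel_measurable_def .

lemma iterated_row_measurable: "t \<ge> 0 \<Longrightarrow> (\<lambda>\<theta>. iterated_kernel n t \<theta>) \<in> borel_measurable M0"
  by (rule kernel_measurable_row[OF kernel_measurable_iterated])

lemma iterated_col_measurable: "s \<ge> 0 \<Longrightarrow> (\<lambda>\<theta>. iterated_kernel n \<theta> s) \<in> borel_measurable M0"
  by (rule kernel_measurable_col[OF kernel_measurable_iterated])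

lemma iterated_row_L1:
  "t \<ge> 0 \<Longrightarrow> (\<integral>\<^sup>+s. ennreal \<bar>iterated_kernel n t s\<bar> \<partial>M0) \<le> ennreal (q ^ Suc n)"
proof (induction n arbitrary: t)
  case 0
  then show ?case using row_L1 by simp
next
  case (Suc n)
  have [measurable]: "(\<lambda>\<theta>. K t \<theta>) \<in> borel_measurable M0"
    using K_row_measurable Suc.prems .
  have "(\<integral>\<^sup>+s. ennreal \<bar>iterated_kernel (Suc n) t s\<bar> \<partial>M0)
      \<le> (\<integral>\<^sup>+s. \<integral>\<^sup>+\<theta>. ennreal \<bar>K t \<theta> * iterated_kernel n \<theta> s\<bar> \<partial>M0 \<partial>M0)"
    by (auto intro!: nn_integral_mono ennreal_abs_integral_le simp: iterated_kernel.simps)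
  also have "\<dots> = (\<integral>\<^sup>+\<theta>. \<integral>\<^sup>+s. ennreal \<bar>K t \<theta> * iterated_kernel n \<theta> s\<bar> \<partial>M0 \<partial>M0)"
    by (rule M0M0.Fubini') measurable
  also have "\<dots> = (\<integral>\<^sup>+\<theta>. ennreal \<bar>K t \<theta>\<bar> * (\<integral>\<^sup>+s. ennreal \<bar>iterated_kernel n \<theta> s\<bar> \<partial>M0) \<partial>M0)"
    by (intro nn_integral_cong)
      (auto simp: abs_mult ennreal_mult intro!: nn_integral_cmult measurable_compose[OF iterated_row_measurable])
  also have "\<dots> \<le> (\<integral>\<^sup>+\<theta>. ennreal \<bar>K t \<theta>\<bar> * ennreal (q ^ Suc n) \<partial>M0)"
    by (intro nn_integral_mono mult_left_mono Suc.IH) auto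
  also have "\<dots> = (\<integral>\<^sup>+\<theta>. ennreal \<bar>K t \<theta>\<bar> \<partial>M0) * ennreal (q ^ Suc n)"
    by (rule nn_integral_multc) measurable
  also have "\<dots> \<le> ennreal q * ennreal (q ^ Suc n)"
    by (intro mult_right_mono row_L1 Suc.prems) auto
  also have "\<dots> = ennreal (q ^ Suc (Suc n))"
    using q_nonneg by (simp add: ennreal_mult[symmetric])
  finally show ?case .
qed

lemma iterated_col_L1:
  "s \<ge> 0 \<Longrightarrow> (\<integral>\<^sup>+t. ennreal \<bar>iterated_kernel n t s\<bar> \<partial>M0) \<le> ennreal (q ^ Suc n)"
proof (induction n arbitrary: s)
  case 0
  then show ?case using col_L1 by simp
next
  case (Suc n)
  have [measurable]: "(\<lambda>\<theta>. iterated_kernel n \<theta> s) \<in> borel_measurable M0"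
    using iterated_col_measurable Suc.prems .
  have "(\<integral>\<^sup>+t. ennreal \<bar>iterated_kernel (Suc n) t s\<bar> \<partial>M0)
      \<le> (\<integral>\<^sup>+t. \<integral>\<^sup>+\<theta>. ennreal \<bar>K t \<theta> * iterated_kernel n \<theta> s\<bar> \<partial>M0 \<partial>M0)"
    by (auto intro!: nn_integral_mono ennreal_abs_integral_le simp: iterated_kernel.simps)
  also have "\<dots> = (\<integral>\<^sup>+\<theta>. \<integral>\<^sup>+t. ennreal \<bar>K t \<theta> * iterated_kernel n \<theta> s\<bar> \<partial>M0 \<partial>M0)"
    by (rule M0M0.Fubini'[symmetric]) measurable
  also have "\<dots> = (\<integral>\<^sup>+\<theta>. (\<integral>\<^sup>+t. ennreal \<bar>K t \<theta>\<bar> \<partial>M0) * ennreal \<bar>iterated_kernel n \<theta> s\<bar> \<partial>M0)"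
    by (intro nn_integral_cong)
      (auto simp: abs_mult ennreal_mult intro!: nn_integral_multc measurable_compose[OF K_col_measurable])
  also have "\<dots> \<le> (\<integral>\<^sup>+\<theta>. ennreal q * ennreal \<bar>iterated_kernel n \<theta> s\<bar> \<partial>M0)"
    by (intro nn_integral_mono mult_right_mono col_L1) auto
  also have "\<dots> = ennreal q * (\<integral>\<^sup>+\<theta>. ennreal \<bar>iterated_kernel n \<theta> s\<bar> \<partial>M0)"
    by (rule nn_integral_cmult) measurable
  also have "\<dots> \<le> ennreal q * ennreal (q ^ Suc n)"
    by (intro mult_left_mono Suc.IH Suc.prems) auto
  also have "\<dots> = ennreal (q ^ Suc (Suc n))"
    using q_nonneg by (simp add: ennreal_mult[symmetric])
  finally show ?case .
qed

lemma nn_integral_K_iterated_le: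
  "t \<ge> 0 \<Longrightarrow> s \<ge> 0 \<Longrightarrow> (\<integral>\<^sup>+\<theta>. ennreal \<bar>K t \<theta> * iterated_kernel n \<theta> s\<bar> \<partial>M0) \<le> ennreal (P * q ^ n)"
proof (induction n arbitrary: t)
  case 0
  then show ?case using nn_integral_K_K_le by simp
next
  case (Suc n)
  have bound: "ennreal \<bar>iterated_kernel (Suc n) \<theta> s\<bar> \<le> ennreal (P * q ^ n)" if "\<theta> \<ge> 0" for \<theta>
    using order.trans[OF ennreal_abs_integral_le Suc.IH[OF that Suc.prems(2)]]
    by (simp add: iterated_kernel.simps)
  have "(\<integral>\<^sup>+\<theta>. ennreal \<bar>K t \<theta> * iterated_kernel (Suc n) \<theta> s\<bar> \<partial>M0)
      = (\<integral>\<^sup>+\<theta>. ennreal \<bar>K t \<theta>\<bar> * ennreal \<bar>iterated_kernel (Suc n) \<theta> s\<bar> \<partial>M0)"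
    by (simp add: abs_mult ennreal_mult)
  also have "\<dots> \<le> (\<integral>\<^sup>+\<theta>. ennreal \<bar>K t \<theta>\<bar> * ennreal (P * q ^ n) \<partial>M0)"
    by (intro nn_integral_mono mult_left_mono bound) auto
  also have "\<dots> = (\<integral>\<^sup>+\<theta>. ennreal \<bar>K t \<theta>\<bar> \<partial>M0) * ennreal (P * q ^ n)"
    by (rule nn_integral_multc) (use K_row_measurable[OF Suc.prems(1)] in measurable)
  also have "\<dots> \<le> ennreal q * ennreal (P * q ^ n)"
    by (intro mult_right_mono row_L1 Suc.prems) auto
  also have "\<dots> = ennreal (P * q ^ Suc n)"
    using q_nonneg P_nonneg by (simp add: ennreal_mult[symmetric] mult_ac)
  finally show ?case .
qed

lemma abs_iterated_Suc_le: "t \<ge> 0 \<Longrightarrow> s \<ge> 0 \<Longrightarrow> \<bar>iterated_kernel (Suc n) t s\<bar> \<le> P * q ^ n"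
  unfolding iterated_kernel.simps
  by (rule abs_integral_le_nn_integral_bound[OF nn_integral_K_iterated_le])
    (use P_nonneg q_nonneg in auto)

lemma nn_integral_iterated_K_le:
  assumes "t \<ge> 0" "s \<ge> 0"
  shows "(\<integral>\<^sup>+\<theta>. ennreal \<bar>iterated_kernel n t \<theta> * K \<theta> s\<bar> \<partial>M0) \<le> ennreal (P * q ^ n)"
proof (cases n)
  case 0
  then show ?thesis using nn_integral_K_K_le assms by simp
next
  case (Suc m)
  have "(\<integral>\<^sup>+\<theta>. ennreal \<bar>iterated_kernel n t \<theta> * K \<theta> s\<bar> \<partial>M0)
      = (\<integral>\<^sup>+\<theta>. ennreal \<bar>iterated_kernel (Suc m) t \<theta>\<bar> * ennreal \<bar>K \<theta> s\<bar> \<partial>M0)"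
    by (simp add: abs_mult ennreal_mult Suc)
  also have "\<dots> \<le> (\<integral>\<^sup>+\<theta>. ennreal (P * q ^ m) * ennreal \<bar>K \<theta> s\<bar> \<partial>M0)"
    using assms by (intro nn_integral_mono mult_right_mono) (auto intro: ennreal_leI abs_iterated_Suc_le)
  also have "\<dots> = ennreal (P * q ^ m) * (\<integral>\<^sup>+\<theta>. ennreal \<bar>K \<theta> s\<bar> \<partial>M0)"
    by (rule nn_integral_cmult) (use K_col_measurable[OF assms(2)] in measurable)
  also have "\<dots> \<le> ennreal (P * q ^ m) * ennreal q"
    by (intro mult_left_mono col_L1 assms) auto
  also have "\<dots> = ennreal (P * q ^ n)"
    using q_nonneg P_nonneg Suc by (simp add: ennreal_mult[symmetric] mult_ac)
  finally show ?thesis .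
qed

lemma integrable_K_iterated: "t \<ge> 0 \<Longrightarrow> s \<ge> 0 \<Longrightarrow> integrable M0 (\<lambda>\<theta>. K t \<theta> * iterated_kernel n \<theta> s)"
  by (rule integrable_nn_integral_bound[OF _ nn_integral_K_iterated_le])
    (auto intro: borel_measurable_times K_row_measurable iterated_col_measurable)

lemma integrable_iterated_K: "t \<ge> 0 \<Longrightarrow> s \<ge> 0 \<Longrightarrow> integrable M0 (\<lambda>\<theta>. iterated_kernel n t \<theta> * K \<theta> s)"
  by (rule integrable_nn_integral_bound[OF _ nn_integral_iterated_K_le])
    (auto intro: borel_measurable_times K_col_measurable iterated_row_measurable)

lemma iterated_kernel_Suc_right:
  "t \<ge> 0 \<Longrightarrow> s \<ge> 0 \<Longrightarrow> iterated_kernel (Suc n) t s = (\<integral>\<theta>. iterated_kernel n t \<theta> * K \<theta> s \<partial>M0)"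
proof (induction n arbitrary: t s)
  case 0
  then show ?case by (simp add: iterated_kernel.simps)
next
  case (Suc n)
  have "iterated_kernel (Suc (Suc n)) t s = (\<integral>\<theta>. K t \<theta> * (\<integral>\<phi>. iterated_kernel n \<theta> \<phi> * K \<phi> s \<partial>M0) \<partial>M0)"
    unfolding iterated_kernel.simps(2)[of "Suc n"]
    by (rule Bochner_Integration.integral_cong[OF refl]) (auto simp: Suc.IH Suc.prems)
  also have "\<dots> = (\<integral>\<phi>. (\<integral>\<theta>. K t \<theta> * iterated_kernel n \<theta> \<phi> \<partial>M0) * K \<phi> s \<partial>M0)"
    using Suc.prems nn_integral_iterated_K_le[OF _ Suc.prems(2)]
    by (intro integral_kernel_assoc[where B = "P * q ^ n" and U = q, OF kernel_measurable_iterated])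
      (auto intro: row_L1 K_row_measurable K_col_measurable)
  also have "\<dots> = (\<integral>\<phi>. iterated_kernel (Suc n) t \<phi> * K \<phi> s \<partial>M0)"
    by (simp add: iterated_kernel.simps)
  finally show ?case .
qed

(* K itself may be unbounded near the diagonal, but the iterated kernels are bounded
   (abs_iterated_Suc_le), so only the tail of the Neumann series is summed pointwise. *)
definition neumann_tail :: "real \<Rightarrow> real \<Rightarrow> real" where
  "neumann_tail t s = (\<Sum>n. (-1) ^ Suc n * iterated_kernel (Suc n) t s)"

definition resolvent :: "real \<Rightarrow> real \<Rightarrow> real" where
  "resolvent t s = K t s + neumann_tail t s"

lemma sums_geometric_P: "(\<lambda>n. P * q ^ n) sums (P / (1 - q))"
  using sums_mult[OF geometric_sums[of q], of P] q_nonneg q_less_1 by (simp add: field_simps)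

lemma summable_abs_iterated: "t \<ge> 0 \<Longrightarrow> s \<ge> 0 \<Longrightarrow> summable (\<lambda>n. \<bar>iterated_kernel (Suc n) t s\<bar>)"
  by (rule summable_comparison_test[OF _ sums_summable[OF sums_geometric_P]]) (auto intro: abs_iterated_Suc_le)

lemma summable_neumann_tail:
  "t \<ge> 0 \<Longrightarrow> s \<ge> 0 \<Longrightarrow> summable (\<lambda>n. (-1) ^ Suc n * iterated_kernel (Suc n) t s)"
  by (rule summable_comparison_test[OF _ sums_summable[OF sums_geometric_P]])
    (auto intro: abs_iterated_Suc_le simp: abs_mult)

lemma abs_neumann_tail_le: "t \<ge> 0 \<Longrightarrow> s \<ge> 0 \<Longrightarrow> \<bar>neumann_tail t s\<bar> \<le> P / (1 - q)"
proof -
  assume "t \<ge> 0" "s \<ge> 0"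
  then have "\<bar>neumann_tail t s\<bar> \<le> (\<Sum>n. \<bar>iterated_kernel (Suc n) t s\<bar>)"
    unfolding neumann_tail_def
    using summable_norm[of "\<lambda>n. (-1) ^ Suc n * iterated_kernel (Suc n) t s"] summable_abs_iterated
    by (simp add: abs_mult)
  also have "\<dots> \<le> (\<Sum>n. P * q ^ n)"
    using \<open>t \<ge> 0\<close> \<open>s \<ge> 0\<close>
    by (intro suminf_le summable_abs_iterated sums_summable[OF sums_geometric_P] abs_iterated_Suc_le)
  also have "\<dots> = P / (1 - q)"
    by (rule sums_unique[OF sums_geometric_P, symmetric])
  finally show ?thesis .
qed

lemma kernel_measurable_neumann_tail: "kernel_measurable neumann_tail"
  unfolding kernel_measurable_def neumann_tail_def
  by (intro borel_measurable_suminf borel_measurable_times) auto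

lemma kernel_measurable_resolvent: "kernel_measurable resolvent"
  using kernel_measurable_neumann_tail measurable_K
  unfolding kernel_measurable_def resolvent_def by (intro borel_measurable_add) auto

lemma resolvent_pair_measurable [measurable]:
  "(\<lambda>z. resolvent (fst z) (snd z)) \<in> borel_measurable (M0 \<Otimes>\<^sub>M M0)"
  using kernel_measurable_resolvent unfolding kernel_measurable_def .

lemma resolvent_row_measurable: "t \<ge> 0 \<Longrightarrow> (\<lambda>\<theta>. resolvent t \<theta>) \<in> borel_measurable M0"
  by (rule kernel_measurable_row[OF kernel_measurable_resolvent])

lemma resolvent_col_measurable: "s \<ge> 0 \<Longrightarrow> (\<lambda>\<theta>. resolvent \<theta> s) \<in> borel_measurable M0"
  by (rule kernel_measurable_col[OF kernel_measurable_resolvent])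

lemma neumann_tail_row_L1:
  assumes "t \<ge> 0"
  shows "(\<integral>\<^sup>+s. ennreal \<bar>neumann_tail t s\<bar> \<partial>M0) \<le> ennreal (q\<^sup>2 / (1 - q))"
proof -
  have "(\<integral>\<^sup>+s. ennreal \<bar>neumann_tail t s\<bar> \<partial>M0) \<le> (\<integral>\<^sup>+s. (\<Sum>n. ennreal \<bar>iterated_kernel (Suc n) t s\<bar>) \<partial>M0)"
    unfolding neumann_tail_def using assms summable_abs_iterated[OF assms]
    by (intro nn_integral_mono)
      (auto simp: suminf_ennreal2 abs_mult intro!: ennreal_leI order.trans[OF summable_rabs])
  also have "\<dots> = (\<Sum>n. \<integral>\<^sup>+s. ennreal \<bar>iterated_kernel (Suc n) t s\<bar> \<partial>M0)"
    by (intro nn_integral_suminf measurable_compose[OF _ measurable_ennreal] borel_measurable_abs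
        iterated_row_measurable assms)
  also have "\<dots> \<le> (\<Sum>n. ennreal (q ^ Suc (Suc n)))"
    using assms by (intro suminf_le iterated_row_L1) auto
  also have "\<dots> = ennreal (q\<^sup>2 / (1 - q))"
    using sums_mult[OF geometric_sums[of q], of "q\<^sup>2"] q_nonneg q_less_1
    by (intro suminf_ennreal_eq) (auto simp: field_simps power2_eq_square)
  finally show ?thesis .
qed

lemma neumann_tail_col_L1:
  assumes "s \<ge> 0"
  shows "(\<integral>\<^sup>+t. ennreal \<bar>neumann_tail t s\<bar> \<partial>M0) \<le> ennreal (q\<^sup>2 / (1 - q))"
proof -
  have "(\<integral>\<^sup>+t. ennreal \<bar>neumann_tail t s\<bar> \<partial>M0) \<le> (\<integral>\<^sup>+t. (\<Sum>n. ennreal \<bar>iterated_kernel (Suc n) t s\<bar>) \<partial>M0)"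
    unfolding neumann_tail_def using assms summable_abs_iterated
    by (intro nn_integral_mono)
      (auto simp: suminf_ennreal2 abs_mult intro!: ennreal_leI order.trans[OF summable_rabs])
  also have "\<dots> = (\<Sum>n. \<integral>\<^sup>+t. ennreal \<bar>iterated_kernel (Suc n) t s\<bar> \<partial>M0)"
    by (intro nn_integral_suminf measurable_compose[OF _ measurable_ennreal] borel_measurable_abs
        iterated_col_measurable assms)
  also have "\<dots> \<le> (\<Sum>n. ennreal (q ^ Suc (Suc n)))"
    using assms by (intro suminf_le iterated_col_L1) auto
  also have "\<dots> = ennreal (q\<^sup>2 / (1 - q))"
    using sums_mult[OF geometric_sums[of q], of "q\<^sup>2"] q_nonneg q_less_1
    by (intro suminf_ennreal_eq) (auto simp: field_simps power2_eq_square)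
  finally show ?thesis .
qed

lemma K_neumann_tail:
  assumes "t \<ge> 0" "s \<ge> 0"
  shows "integrable M0 (\<lambda>\<theta>. K t \<theta> * neumann_tail \<theta> s)"
    and "(\<integral>\<theta>. K t \<theta> * neumann_tail \<theta> s \<partial>M0) = (\<Sum>n. (-1) ^ Suc n * iterated_kernel (Suc (Suc n)) t s)"
proof -
  define f where "f n \<theta> = (-1) ^ Suc n * (K t \<theta> * iterated_kernel (Suc n) \<theta> s)" for n \<theta>
  have series: "K t \<theta> * neumann_tail \<theta> s = (\<Sum>n. f n \<theta>)" if "\<theta> \<in> space M0" for \<theta>
    unfolding neumann_tail_def f_def
    using suminf_mult[OF summable_neumann_tail[OF _ assms(2)], of \<theta> "K t \<theta>"] that
    by (simp add: mult_ac)
  have integrable: "integrable M0 (f n)" for n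
    unfolding f_def using integrable_K_iterated[OF assms] by simp
  have pointwise: "AE \<theta> in M0. \<forall>n. \<bar>f n \<theta>\<bar> \<le> \<bar>K t \<theta>\<bar> * P * q ^ n"
    using assms
    by (intro AE_I2) (auto simp: f_def abs_mult mult.assoc intro!: mult_left_mono abs_iterated_Suc_le)
  have integral: "(\<integral>\<theta>. \<bar>f n \<theta>\<bar> \<partial>M0) \<le> P * q * q ^ n" for n
    unfolding f_def
    using integral_abs_le_nn_integral_bound[OF integrable_K_iterated[OF assms, of "Suc n"]
        nn_integral_K_iterated_le[OF assms, of "Suc n"]] P_nonneg q_nonneg
    by (simp add: abs_mult mult_ac)
  note series_integrable = integral_suminf_geometric(1)[OF integrable pointwise integral q_nonneg q_less_1]
    and series_integral = integral_suminf_geometric(2)[OF integrable pointwise integral q_nonneg q_less_1]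
  show "integrable M0 (\<lambda>\<theta>. K t \<theta> * neumann_tail \<theta> s)"
    using series_integrable by (subst Bochner_Integration.integrable_cong[OF refl series]) auto
  have "(\<integral>\<theta>. K t \<theta> * neumann_tail \<theta> s \<partial>M0) = (\<integral>\<theta>. (\<Sum>n. f n \<theta>) \<partial>M0)"
    by (rule Bochner_Integration.integral_cong[OF refl series])
  also have "\<dots> = (\<Sum>n. (-1) ^ Suc n * iterated_kernel (Suc (Suc n)) t s)"
    using series_integral by (simp add: f_def iterated_kernel.simps(2)[of "Suc _"])
  finally show "(\<integral>\<theta>. K t \<theta> * neumann_tail \<theta> s \<partial>M0) = (\<Sum>n. (-1) ^ Suc n * iterated_kernel (Suc (Suc n)) t s)" .
qed

lemma neumann_tail_K:
  assumes "t \<ge> 0" "s \<ge> 0"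
  shows "integrable M0 (\<lambda>\<theta>. neumann_tail t \<theta> * K \<theta> s)"
    and "(\<integral>\<theta>. neumann_tail t \<theta> * K \<theta> s \<partial>M0) = (\<Sum>n. (-1) ^ Suc n * iterated_kernel (Suc (Suc n)) t s)"
proof -
  define f where "f n \<theta> = (-1) ^ Suc n * (iterated_kernel (Suc n) t \<theta> * K \<theta> s)" for n \<theta>
  have series: "neumann_tail t \<theta> * K \<theta> s = (\<Sum>n. f n \<theta>)" if "\<theta> \<in> space M0" for \<theta>
    unfolding neumann_tail_def f_def
    using suminf_mult2[OF summable_neumann_tail[OF assms(1)], of \<theta> "K \<theta> s"] that
    by (simp add: mult_ac)
  have integrable: "integrable M0 (f n)" for n
    unfolding f_def using integrable_iterated_K[OF assms] by simp
  have pointwise: "AE \<theta> in M0. \<forall>n. \<bar>f n \<theta>\<bar> \<le> \<bar>K \<theta> s\<bar> * P * q ^ n"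
  proof (intro AE_I2 allI)
    fix \<theta> n
    assume "\<theta> \<in> space M0"
    then have "\<bar>iterated_kernel (Suc n) t \<theta>\<bar> \<le> P * q ^ n"
      using assms by (intro abs_iterated_Suc_le) auto
    from mult_right_mono[OF this abs_ge_zero[of "K \<theta> s"]] show "\<bar>f n \<theta>\<bar> \<le> \<bar>K \<theta> s\<bar> * P * q ^ n"
      by (simp add: f_def abs_mult mult_ac)
  qed
  have integral: "(\<integral>\<theta>. \<bar>f n \<theta>\<bar> \<partial>M0) \<le> P * q * q ^ n" for n
    unfolding f_def
    using integral_abs_le_nn_integral_bound[OF integrable_iterated_K[OF assms, of "Suc n"]
        nn_integral_iterated_K_le[OF assms, of "Suc n"]] P_nonneg q_nonneg
    by (simp add: abs_mult mult_ac)
  note series_integrable = integral_suminf_geometric(1)[OF integrable pointwise integral q_nonneg q_less_1]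
    and series_integral = integral_suminf_geometric(2)[OF integrable pointwise integral q_nonneg q_less_1]
  show "integrable M0 (\<lambda>\<theta>. neumann_tail t \<theta> * K \<theta> s)"
    using series_integrable by (subst Bochner_Integration.integrable_cong[OF refl series]) auto
  have "(\<integral>\<theta>. neumann_tail t \<theta> * K \<theta> s \<partial>M0) = (\<integral>\<theta>. (\<Sum>n. f n \<theta>) \<partial>M0)"
    by (rule Bochner_Integration.integral_cong[OF refl series])
  also have "\<dots> = (\<Sum>n. (-1) ^ Suc n * iterated_kernel (Suc (Suc n)) t s)"
    using series_integral by (simp add: f_def iterated_kernel_Suc_right[OF assms, of "Suc _"])
  finally show "(\<integral>\<theta>. neumann_tail t \<theta> * K \<theta> s \<partial>M0) = (\<Sum>n. (-1) ^ Suc n * iterated_kernel (Suc (Suc n)) t s)" .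
qed

lemma neumann_tail_eq:
  assumes "t \<ge> 0" "s \<ge> 0"
  shows "neumann_tail t s = - iterated_kernel 1 t s - (\<Sum>n. (-1) ^ Suc n * iterated_kernel (Suc (Suc n)) t s)"
proof -
  have summable: "summable (\<lambda>n. (-1) ^ Suc n * iterated_kernel (Suc n) t s)"
    by (rule summable_neumann_tail[OF assms])
  then have "summable (\<lambda>n. (-1) ^ Suc n * iterated_kernel (Suc (Suc n)) t s)"
    using summable_minus[OF iffD2[OF summable_Suc_iff summable]] by simp
  then have "(\<Sum>n. (-1) ^ Suc (Suc n) * iterated_kernel (Suc (Suc n)) t s)
      = - (\<Sum>n. (-1) ^ Suc n * iterated_kernel (Suc (Suc n)) t s)"
    using suminf_minus by fastforce
  moreover have "(\<Sum>n. (-1) ^ Suc (Suc n) * iterated_kernel (Suc (Suc n)) t s) = neumann_tail t s + iterated_kernel 1 t s"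
    unfolding neumann_tail_def using suminf_split_head[OF summable] by simp
  ultimately show ?thesis
    by simp
qed

lemma resolvent_left:
  assumes "t \<ge> 0" "s \<ge> 0"
  shows "integrable M0 (\<lambda>\<theta>. K t \<theta> * resolvent \<theta> s)"
    and "resolvent t s + (\<integral>\<theta>. K t \<theta> * resolvent \<theta> s \<partial>M0) = K t s"
proof -
  have split: "(\<lambda>\<theta>. K t \<theta> * resolvent \<theta> s) = (\<lambda>\<theta>. K t \<theta> * iterated_kernel 0 \<theta> s + K t \<theta> * neumann_tail \<theta> s)"
    by (simp add: resolvent_def algebra_simps)
  show "integrable M0 (\<lambda>\<theta>. K t \<theta> * resolvent \<theta> s)"
    unfolding split by (intro Bochner_Integration.integrable_add integrable_K_iterated K_neumann_tail assms)
  have "(\<integral>\<theta>. K t \<theta> * resolvent \<theta> s \<partial>M0)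
      = iterated_kernel 1 t s + (\<Sum>n. (-1) ^ Suc n * iterated_kernel (Suc (Suc n)) t s)"
    unfolding split
    by (subst Bochner_Integration.integral_add)
      (auto intro: integrable_K_iterated[OF assms, of 0, simplified] K_neumann_tail assms
        simp: K_neumann_tail(2)[OF assms] iterated_kernel.simps(2)[of 0])
  then show "resolvent t s + (\<integral>\<theta>. K t \<theta> * resolvent \<theta> s \<partial>M0) = K t s"
    by (simp add: resolvent_def neumann_tail_eq[OF assms])
qed

lemma resolvent_right:
  assumes "t \<ge> 0" "s \<ge> 0"
  shows "integrable M0 (\<lambda>\<theta>. resolvent t \<theta> * K \<theta> s)"
    and "resolvent t s + (\<integral>\<theta>. resolvent t \<theta> * K \<theta> s \<partial>M0) = K t s"
proof -
  have split: "(\<lambda>\<theta>. resolvent t \<theta> * K \<theta> s) = (\<lambda>\<theta>. iterated_kernel 0 t \<theta> * K \<theta> s + neumann_tail t \<theta> * K \<theta> s)"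
    by (simp add: resolvent_def algebra_simps)
  show "integrable M0 (\<lambda>\<theta>. resolvent t \<theta> * K \<theta> s)"
    unfolding split by (intro Bochner_Integration.integrable_add integrable_iterated_K neumann_tail_K assms)
  have "(\<integral>\<theta>. resolvent t \<theta> * K \<theta> s \<partial>M0)
      = iterated_kernel 1 t s + (\<Sum>n. (-1) ^ Suc n * iterated_kernel (Suc (Suc n)) t s)"
    unfolding split
    by (subst Bochner_Integration.integral_add)
      (auto intro: integrable_iterated_K[OF assms, of 0, simplified] neumann_tail_K assms
        simp: neumann_tail_K(2)[OF assms] iterated_kernel.simps(2)[of 0])
  then show "resolvent t s + (\<integral>\<theta>. resolvent t \<theta> * K \<theta> s \<partial>M0) = K t s"
    by (simp add: resolvent_def neumann_tail_eq[OF assms])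
qed

lemma resolvent_row_L1:
  assumes "t \<ge> 0"
  shows "(\<integral>\<^sup>+s. ennreal \<bar>resolvent t s\<bar> \<partial>M0) \<le> ennreal (q / (1 - q))"
proof -
  have [measurable]: "(\<lambda>\<theta>. neumann_tail t \<theta>) \<in> borel_measurable M0" "(\<lambda>\<theta>. K t \<theta>) \<in> borel_measurable M0"
    using kernel_measurable_row[OF kernel_measurable_neumann_tail assms] K_row_measurable[OF assms] .
  have "(\<integral>\<^sup>+s. ennreal \<bar>resolvent t s\<bar> \<partial>M0) \<le> (\<integral>\<^sup>+s. ennreal \<bar>K t s\<bar> + ennreal \<bar>neumann_tail t s\<bar> \<partial>M0)"
    by (intro nn_integral_mono)
      (auto simp: resolvent_def ennreal_plus[symmetric] simp del: ennreal_plus intro!: ennreal_leI)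
  also have "\<dots> = (\<integral>\<^sup>+s. ennreal \<bar>K t s\<bar> \<partial>M0) + (\<integral>\<^sup>+s. ennreal \<bar>neumann_tail t s\<bar> \<partial>M0)"
    by (rule nn_integral_add) auto
  also have "\<dots> \<le> ennreal q + ennreal (q\<^sup>2 / (1 - q))"
    by (intro add_mono row_L1 neumann_tail_row_L1 assms)
  also have "\<dots> = ennreal (q / (1 - q))"
    using q_nonneg q_less_1
    by (simp add: ennreal_plus[symmetric] field_simps power2_eq_square del: ennreal_plus)
  finally show ?thesis .
qed

lemma resolvent_col_L1:
  assumes "s \<ge> 0"
  shows "(\<integral>\<^sup>+t. ennreal \<bar>resolvent t s\<bar> \<partial>M0) \<le> ennreal (q / (1 - q))"
proof -
  have [measurable]: "(\<lambda>\<theta>. neumann_tail \<theta> s) \<in> borel_measurable M0" "(\<lambda>\<theta>. K \<theta> s) \<in> borel_measurable M0"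
    using kernel_measurable_col[OF kernel_measurable_neumann_tail assms] K_col_measurable[OF assms] .
  have "(\<integral>\<^sup>+t. ennreal \<bar>resolvent t s\<bar> \<partial>M0) \<le> (\<integral>\<^sup>+t. ennreal \<bar>K t s\<bar> + ennreal \<bar>neumann_tail t s\<bar> \<partial>M0)"
    by (intro nn_integral_mono)
      (auto simp: resolvent_def ennreal_plus[symmetric] simp del: ennreal_plus intro!: ennreal_leI)
  also have "\<dots> = (\<integral>\<^sup>+t. ennreal \<bar>K t s\<bar> \<partial>M0) + (\<integral>\<^sup>+t. ennreal \<bar>neumann_tail t s\<bar> \<partial>M0)"
    by (rule nn_integral_add) auto
  also have "\<dots> \<le> ennreal q + ennreal (q\<^sup>2 / (1 - q))"
    by (intro add_mono col_L1 neumann_tail_col_L1 assms)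
  also have "\<dots> = ennreal (q / (1 - q))"
    using q_nonneg q_less_1
    by (simp add: ennreal_plus[symmetric] field_simps power2_eq_square del: ennreal_plus)
  finally show ?thesis .
qed

lemma power2_resolvent_le:
  assumes "t \<ge> 0" "s \<ge> 0"
  shows "(resolvent t s)\<^sup>2 \<le> 2 * (K t s)\<^sup>2 + 2 * (P / (1 - q)) * \<bar>neumann_tail t s\<bar>"
proof -
  have "\<bar>neumann_tail t s\<bar> * \<bar>neumann_tail t s\<bar> \<le> P / (1 - q) * \<bar>neumann_tail t s\<bar>"
    by (rule mult_right_mono[OF abs_neumann_tail_le[OF assms]]) simp
  then show ?thesis
    using power2_add_le[of "K t s" "neumann_tail t s"] unfolding resolvent_def by (simp add: power2_eq_square)
qed

lemma resolvent_L2_constant_le: "2 * P + 2 * (P / (1 - q)) * (q\<^sup>2 / (1 - q)) \<le> 2 * P / (1 - q)\<^sup>2"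
proof -
  have "(1 - q)\<^sup>2 + q\<^sup>2 \<le> 1"
    using q_nonneg q_less_1 by (simp add: power2_eq_square algebra_simps mult_left_le)
  then have "2 * P * ((1 - q)\<^sup>2 + q\<^sup>2) \<le> 2 * P"
    using P_nonneg by (simp add: mult_left_le)
  have "(1 - q)\<^sup>2 \<noteq> 0"
    using q_less_1 by simp
  then have "2 * P + 2 * (P / (1 - q)) * (q\<^sup>2 / (1 - q)) = 2 * P * (1 - q)\<^sup>2 / (1 - q)\<^sup>2 + 2 * P * q\<^sup>2 / (1 - q)\<^sup>2"
    by (simp add: power2_eq_square)
  also have "\<dots> = 2 * P * ((1 - q)\<^sup>2 + q\<^sup>2) / (1 - q)\<^sup>2"
    by (simp only: add_divide_distrib distrib_left)
  also have "\<dots> \<le> 2 * P / (1 - q)\<^sup>2"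
    by (rule divide_right_mono[OF \<open>2 * P * ((1 - q)\<^sup>2 + q\<^sup>2) \<le> 2 * P\<close>]) simp
  finally show ?thesis .
qed

lemma resolvent_row_L2:
  assumes "t \<ge> 0"
  shows "(\<integral>\<^sup>+s. ennreal ((resolvent t s)\<^sup>2) \<partial>M0) \<le> ennreal (2 * P / (1 - q)\<^sup>2)"
proof -
  have [measurable]: "(\<lambda>\<theta>. neumann_tail t \<theta>) \<in> borel_measurable M0" "(\<lambda>\<theta>. K t \<theta>) \<in> borel_measurable M0"
    using kernel_measurable_row[OF kernel_measurable_neumann_tail assms] K_row_measurable[OF assms] .
  define c where "c = 2 * (P / (1 - q))"
  have "c \<ge> 0"
    unfolding c_def using P_nonneg q_less_1 by simp
  have "ennreal ((resolvent t s)\<^sup>2) \<le> ennreal 2 * ennreal ((K t s)\<^sup>2) + ennreal c * ennreal \<bar>neumann_tail t s\<bar>"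
    if "s \<ge> 0" for s
  proof -
    have "ennreal ((resolvent t s)\<^sup>2) \<le> ennreal (2 * (K t s)\<^sup>2 + c * \<bar>neumann_tail t s\<bar>)"
      unfolding c_def by (rule ennreal_leI[OF power2_resolvent_le[OF assms that]])
    also have "\<dots> = ennreal (2 * (K t s)\<^sup>2) + ennreal (c * \<bar>neumann_tail t s\<bar>)"
      by (rule ennreal_plus) (use \<open>c \<ge> 0\<close> in auto)
    also have "\<dots> = ennreal 2 * ennreal ((K t s)\<^sup>2) + ennreal c * ennreal \<bar>neumann_tail t s\<bar>"
      by (subst (1 2) ennreal_mult) (use \<open>c \<ge> 0\<close> in auto)
    finally show ?thesis .
  qed
  then have "(\<integral>\<^sup>+s. ennreal ((resolvent t s)\<^sup>2) \<partial>M0)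
      \<le> (\<integral>\<^sup>+s. ennreal 2 * ennreal ((K t s)\<^sup>2) + ennreal c * ennreal \<bar>neumann_tail t s\<bar> \<partial>M0)"
    by (intro nn_integral_mono) auto
  also have "\<dots> = ennreal 2 * (\<integral>\<^sup>+s. ennreal ((K t s)\<^sup>2) \<partial>M0) + ennreal c * (\<integral>\<^sup>+s. ennreal \<bar>neumann_tail t s\<bar> \<partial>M0)"
    by (simp add: nn_integral_add nn_integral_cmult)
  also have "\<dots> \<le> ennreal 2 * ennreal P + ennreal c * ennreal (q\<^sup>2 / (1 - q))"
    by (intro add_mono mult_left_mono row_L2 neumann_tail_row_L1 assms) auto
  also have "\<dots> = ennreal (2 * P) + ennreal (c * (q\<^sup>2 / (1 - q)))"
    by (subst (1 2) ennreal_mult) (use P_nonneg q_less_1 \<open>c \<ge> 0\<close> in auto)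
  also have "\<dots> = ennreal (2 * P + c * (q\<^sup>2 / (1 - q)))"
    by (rule ennreal_plus[symmetric]) (use P_nonneg q_less_1 \<open>c \<ge> 0\<close> in auto)
  also have "\<dots> \<le> ennreal (2 * P / (1 - q)\<^sup>2)"
    unfolding c_def by (rule ennreal_leI[OF resolvent_L2_constant_le])
  finally show ?thesis .
qed

lemma nn_integral_K_row_mult_le:
  assumes "f \<in> borel_measurable M0" "(\<integral>\<^sup>+s. ennreal ((f s)\<^sup>2) \<partial>M0) \<le> ennreal F" "F \<ge> 0" "t \<ge> 0"
  shows "(\<integral>\<^sup>+s. ennreal \<bar>K t s * f s\<bar> \<partial>M0) \<le> ennreal ((P + F) / 2)"
  by (rule nn_integral_abs_mult_le[OF K_row_measurable[OF assms(4)] assms(1) row_L2[OF assms(4)] assms(2)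
        P_nonneg assms(3)])

lemma nn_integral_resolvent_row_mult_le:
  assumes "f \<in> borel_measurable M0" "(\<integral>\<^sup>+s. ennreal ((f s)\<^sup>2) \<partial>M0) \<le> ennreal F" "F \<ge> 0" "t \<ge> 0"
  shows "(\<integral>\<^sup>+s. ennreal \<bar>resolvent t s * f s\<bar> \<partial>M0) \<le> ennreal ((2 * P / (1 - q)\<^sup>2 + F) / 2)"
  by (rule nn_integral_abs_mult_le[OF resolvent_row_measurable[OF assms(4)] assms(1)
        resolvent_row_L2[OF assms(4)] assms(2) _ assms(3)]) (use P_nonneg in simp)

lemma nn_integral_resolvent_apply_power2_finite:
  assumes [measurable]: "f \<in> borel_measurable M0" and "(\<integral>\<^sup>+s. ennreal ((f s)\<^sup>2) \<partial>M0) < \<infinity>"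
  shows "(\<integral>\<^sup>+t. ennreal ((\<integral>s. resolvent t s * f s \<partial>M0)\<^sup>2) \<partial>M0) < \<infinity>"
proof -
  have pointwise: "ennreal ((\<integral>s. resolvent t s * f s \<partial>M0)\<^sup>2) \<le> (\<integral>\<^sup>+s. ennreal \<bar>resolvent t s\<bar> * ennreal \<bar>f s\<bar> \<partial>M0)\<^sup>2"
    for t
  proof -
    have "ennreal ((\<integral>s. resolvent t s * f s \<partial>M0)\<^sup>2) = (ennreal \<bar>\<integral>s. resolvent t s * f s \<partial>M0\<bar>)\<^sup>2"
      by (simp add: ennreal_power)
    also have "\<dots> \<le> (\<integral>\<^sup>+s. ennreal \<bar>resolvent t s\<bar> * ennreal \<bar>f s\<bar> \<partial>M0)\<^sup>2"
      using ennreal_abs_integral_le[of M0 "\<lambda>s. resolvent t s * f s"]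
      by (intro power_mono) (auto simp: abs_mult ennreal_mult)
    finally show ?thesis .
  qed
  have "(\<integral>\<^sup>+t. ennreal ((\<integral>s. resolvent t s * f s \<partial>M0)\<^sup>2) \<partial>M0)
      \<le> (\<integral>\<^sup>+t. (\<integral>\<^sup>+s. ennreal \<bar>resolvent t s\<bar> * ennreal \<bar>f s\<bar> \<partial>M0)\<^sup>2 \<partial>M0)"
    by (intro nn_integral_mono pointwise)
  also have "\<dots> \<le> ennreal (q / (1 - q) * (q / (1 - q))) * (\<integral>\<^sup>+s. (ennreal \<bar>f s\<bar>)\<^sup>2 \<partial>M0)"
    using q_nonneg q_less_1
    by (intro nn_integral_kernel_power2_le[OF kernel_measurable_resolvent _ _ resolvent_row_L1 resolvent_col_L1])
      auto
  also have "\<dots> = ennreal (q / (1 - q) * (q / (1 - q))) * (\<integral>\<^sup>+s. ennreal ((f s)\<^sup>2) \<partial>M0)"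
    by (simp add: ennreal_power)
  also have "\<dots> < \<infinity>"
    using assms(2) by (simp add: ennreal_mult_less_top)
  finally show ?thesis .
qed

lemma integrable_K_row: "t \<ge> 0 \<Longrightarrow> integrable M0 (\<lambda>s. K t s)"
  by (rule integrable_nn_integral_bound[OF K_row_measurable row_L1])

lemma integrable_resolvent_row: "t \<ge> 0 \<Longrightarrow> integrable M0 (\<lambda>s. resolvent t s)"
  by (rule integrable_nn_integral_bound[OF resolvent_row_measurable resolvent_row_L1])

lemma resolvent_solution:
  assumes f [measurable]: "f \<in> borel_measurable M0"
    and F: "(\<integral>\<^sup>+s. ennreal ((f s)\<^sup>2) \<partial>M0) \<le> ennreal F" "F \<ge> 0" and t: "t \<ge> 0"
  defines "x \<equiv> \<lambda>s. f s - (\<integral>u. resolvent s u * f u \<partial>M0)"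
  shows "integrable M0 (\<lambda>s. K t s * x s)" and "x t + (\<integral>s. K t s * x s \<partial>M0) = f t"
proof -
  define Rf where "Rf s = (\<integral>u. resolvent s u * f u \<partial>M0)" for s
  define B where "B = (2 * P / (1 - q)\<^sup>2 + F) / 2"
  have [measurable]: "Rf \<in> borel_measurable M0" "(\<lambda>s. K t s) \<in> borel_measurable M0"
    unfolding Rf_def using K_row_measurable[OF t] by measurable
  have Rf_bound: "\<bar>Rf s\<bar> \<le> B" if "s \<in> space M0" for s
    unfolding Rf_def B_def using that P_nonneg F(2)
    by (intro abs_integral_le_nn_integral_bound nn_integral_resolvent_row_mult_le[OF f F]) auto
  have Kf: "integrable M0 (\<lambda>s. K t s * f s)"
    by (rule integrable_nn_integral_bound[OF _ nn_integral_K_row_mult_le[OF f F t]]) measurable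
  have Rf: "integrable M0 (\<lambda>s. resolvent t s * f s)"
    by (rule integrable_nn_integral_bound[OF _ nn_integral_resolvent_row_mult_le[OF f F t]])
      (use resolvent_row_measurable[OF t] in measurable)
  have KRf: "integrable M0 (\<lambda>s. K t s * Rf s)"
    by (rule integrable_mult_bounded[OF integrable_K_row[OF t] _ Rf_bound]) measurable
  have "(\<integral>s. K t s * Rf s \<partial>M0) = (\<integral>u. (\<integral>s. K t s * resolvent s u \<partial>M0) * f u \<partial>M0)"
    unfolding Rf_def
    by (rule integral_kernel_assoc[OF kernel_measurable_resolvent K_row_measurable[OF t] f
          nn_integral_resolvent_row_mult_le[OF f F] row_L1[OF t]])
  also have "\<dots> = (\<integral>u. (K t u - resolvent t u) * f u \<partial>M0)"
  proof (rule Bochner_Integration.integral_cong[OF refl])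
    fix u
    assume "u \<in> space M0"
    then have "(\<integral>s. K t s * resolvent s u \<partial>M0) = K t u - resolvent t u"
      using resolvent_left(2)[OF t, of u] by simp
    then show "(\<integral>s. K t s * resolvent s u \<partial>M0) * f u = (K t u - resolvent t u) * f u"
      by simp
  qed
  also have "\<dots> = (\<integral>u. K t u * f u \<partial>M0) - Rf t"
    unfolding Rf_def using Bochner_Integration.integral_diff[OF Kf Rf] by (simp add: algebra_simps)
  finally have "(\<integral>s. K t s * Rf s \<partial>M0) = (\<integral>u. K t u * f u \<partial>M0) - Rf t" .
  moreover have "x = (\<lambda>s. f s - Rf s)"
    unfolding x_def Rf_def ..
  ultimately show "integrable M0 (\<lambda>s. K t s * x s)" and "x t + (\<integral>s. K t s * x s \<partial>M0) = f t"
    using Kf KRf by (simp_all add: right_diff_distrib)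
qed

lemma integral_resolvent_equation:
  assumes y [measurable]: "y \<in> borel_measurable M0"
    and Y: "(\<integral>\<^sup>+s. ennreal ((y s)\<^sup>2) \<partial>M0) \<le> ennreal Y" "Y \<ge> 0" and t: "t \<ge> 0"
  shows "(\<integral>\<theta>. resolvent t \<theta> * (y \<theta> + (\<integral>s. K \<theta> s * y s \<partial>M0)) \<partial>M0) = (\<integral>s. K t s * y s \<partial>M0)"
proof -
  define Ky where "Ky \<theta> = (\<integral>s. K \<theta> s * y s \<partial>M0)" for \<theta>
  define B where "B = (P + Y) / 2"
  have [measurable]: "Ky \<in> borel_measurable M0" "(\<lambda>s. resolvent t s) \<in> borel_measurable M0"
    unfolding Ky_def using resolvent_row_measurable[OF t] by measurable
  have Ky_bound: "\<bar>Ky \<theta>\<bar> \<le> B" if "\<theta> \<in> space M0" for \<theta>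
    unfolding Ky_def B_def using that P_nonneg Y(2)
    by (intro abs_integral_le_nn_integral_bound nn_integral_K_row_mult_le[OF y Y]) auto
  have Ky: "integrable M0 (\<lambda>s. K t s * y s)"
    by (rule integrable_nn_integral_bound[OF _ nn_integral_K_row_mult_le[OF y Y t]])
      (use K_row_measurable[OF t] in measurable)
  have Ry: "integrable M0 (\<lambda>s. resolvent t s * y s)"
    by (rule integrable_nn_integral_bound[OF _ nn_integral_resolvent_row_mult_le[OF y Y t]]) measurable
  have RKy: "integrable M0 (\<lambda>s. resolvent t s * Ky s)"
    by (rule integrable_mult_bounded[OF integrable_resolvent_row[OF t] _ Ky_bound]) measurable
  have "(\<integral>\<theta>. resolvent t \<theta> * Ky \<theta> \<partial>M0) = (\<integral>s. (\<integral>\<theta>. resolvent t \<theta> * K \<theta> s \<partial>M0) * y s \<partial>M0)"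
    unfolding Ky_def
    by (rule integral_kernel_assoc[OF measurable_K resolvent_row_measurable[OF t] y
          nn_integral_K_row_mult_le[OF y Y] resolvent_row_L1[OF t]])
  also have "\<dots> = (\<integral>s. (K t s - resolvent t s) * y s \<partial>M0)"
  proof (rule Bochner_Integration.integral_cong[OF refl])
    fix s
    assume "s \<in> space M0"
    then have "(\<integral>\<theta>. resolvent t \<theta> * K \<theta> s \<partial>M0) = K t s - resolvent t s"
      using resolvent_right(2)[OF t, of s] by simp
    then show "(\<integral>\<theta>. resolvent t \<theta> * K \<theta> s \<partial>M0) * y s = (K t s - resolvent t s) * y s"
      by simp
  qed
  also have "\<dots> = Ky t - (\<integral>s. resolvent t s * y s \<partial>M0)"
    unfolding Ky_def using Bochner_Integration.integral_diff[OF Ky Ry] by (simp add: algebra_simps)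
  finally show ?thesis
    using Ry RKy unfolding Ky_def by (simp add: distrib_left)
qed

(* enn2real is harmless here: the integral is finite for t, phi >= 0 (ennreal_abs_resolvent_K). *)
definition abs_resolvent_K :: "real \<Rightarrow> real \<Rightarrow> real" where
  "abs_resolvent_K t \<phi> = enn2real (\<integral>\<^sup>+\<theta>. ennreal \<bar>resolvent t \<theta>\<bar> * ennreal \<bar>K \<theta> \<phi>\<bar> \<partial>M0)"

lemma kernel_measurable_abs_resolvent_K: "kernel_measurable abs_resolvent_K"
proof -
  have [measurable]:
    "(\<lambda>x. resolvent (fst (fst x)) (snd x)) \<in> borel_measurable ((M0 \<Otimes>\<^sub>M M0) \<Otimes>\<^sub>M M0)"
    "(\<lambda>x. K (snd x) (snd (fst x))) \<in> borel_measurable ((M0 \<Otimes>\<^sub>M M0) \<Otimes>\<^sub>M M0)"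
    by (intro kernel_measurable_comp[OF kernel_measurable_resolvent] kernel_measurable_comp[OF measurable_K];
        measurable)+
  show ?thesis
    unfolding kernel_measurable_def abs_resolvent_K_def by measurable
qed

lemma ennreal_abs_resolvent_K:
  assumes "t \<ge> 0" "\<phi> \<ge> 0"
  shows "ennreal \<bar>abs_resolvent_K t \<phi>\<bar> = (\<integral>\<^sup>+\<theta>. ennreal \<bar>resolvent t \<theta>\<bar> * ennreal \<bar>K \<theta> \<phi>\<bar> \<partial>M0)"
proof -
  have "(\<integral>\<^sup>+\<theta>. ennreal \<bar>resolvent t \<theta>\<bar> * ennreal \<bar>K \<theta> \<phi>\<bar> \<partial>M0) \<le> ennreal ((2 * P / (1 - q)\<^sup>2 + P) / 2)"
    using nn_integral_abs_mult_le[OF resolvent_row_measurable[OF assms(1)] K_col_measurable[OF assms(2)]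
        resolvent_row_L2[OF assms(1)] col_L2[OF assms(2)] _ P_nonneg] P_nonneg
    by (simp add: abs_mult ennreal_mult)
  then show ?thesis
    unfolding abs_resolvent_K_def using le_less_trans[OF _ ennreal_less_top] by (simp add: ennreal_enn2real)
qed

lemma abs_resolvent_K_row_L1:
  assumes "t \<ge> 0"
  shows "(\<integral>\<^sup>+\<phi>. ennreal \<bar>abs_resolvent_K t \<phi>\<bar> \<partial>M0) \<le> ennreal (q / (1 - q) * q)"
proof -
  have [measurable]: "(\<lambda>\<theta>. resolvent t \<theta>) \<in> borel_measurable M0"
    by (rule resolvent_row_measurable[OF assms])
  have "(\<integral>\<^sup>+\<phi>. ennreal \<bar>abs_resolvent_K t \<phi>\<bar> \<partial>M0)
      = (\<integral>\<^sup>+\<phi>. \<integral>\<^sup>+\<theta>. ennreal \<bar>resolvent t \<theta>\<bar> * ennreal \<bar>K \<theta> \<phi>\<bar> \<partial>M0 \<partial>M0)"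
    using assms by (intro nn_integral_cong) (simp add: ennreal_abs_resolvent_K)
  also have "\<dots> = (\<integral>\<^sup>+\<theta>. \<integral>\<^sup>+\<phi>. ennreal \<bar>resolvent t \<theta>\<bar> * ennreal \<bar>K \<theta> \<phi>\<bar> \<partial>M0 \<partial>M0)"
    by (rule M0M0.Fubini') measurable
  also have "\<dots> = (\<integral>\<^sup>+\<theta>. ennreal \<bar>resolvent t \<theta>\<bar> * (\<integral>\<^sup>+\<phi>. ennreal \<bar>K \<theta> \<phi>\<bar> \<partial>M0) \<partial>M0)"
    by (intro nn_integral_cong nn_integral_cmult)
      (auto intro!: measurable_compose[OF _ measurable_ennreal] borel_measurable_abs K_row_measurable)
  also have "\<dots> \<le> (\<integral>\<^sup>+\<theta>. ennreal \<bar>resolvent t \<theta>\<bar> * ennreal q \<partial>M0)"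
    by (intro nn_integral_mono mult_left_mono row_L1) auto
  also have "\<dots> = (\<integral>\<^sup>+\<theta>. ennreal \<bar>resolvent t \<theta>\<bar> \<partial>M0) * ennreal q"
    by (rule nn_integral_multc) measurable
  also have "\<dots> \<le> ennreal (q / (1 - q)) * ennreal q"
    by (intro mult_right_mono resolvent_row_L1 assms) auto
  also have "\<dots> = ennreal (q / (1 - q) * q)"
    by (rule ennreal_mult[symmetric]) (use q_nonneg q_less_1 in auto)
  finally show ?thesis .
qed

lemma abs_resolvent_K_col_L1:
  assumes "\<phi> \<ge> 0"
  shows "(\<integral>\<^sup>+t. ennreal \<bar>abs_resolvent_K t \<phi>\<bar> \<partial>M0) \<le> ennreal (q / (1 - q) * q)"
proof -
  have [measurable]: "(\<lambda>\<theta>. K \<theta> \<phi>) \<in> borel_measurable M0"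
    by (rule K_col_measurable[OF assms])
  have "(\<integral>\<^sup>+t. ennreal \<bar>abs_resolvent_K t \<phi>\<bar> \<partial>M0)
      = (\<integral>\<^sup>+t. \<integral>\<^sup>+\<theta>. ennreal \<bar>resolvent t \<theta>\<bar> * ennreal \<bar>K \<theta> \<phi>\<bar> \<partial>M0 \<partial>M0)"
    using assms by (intro nn_integral_cong) (simp add: ennreal_abs_resolvent_K)
  also have "\<dots> = (\<integral>\<^sup>+\<theta>. \<integral>\<^sup>+t. ennreal \<bar>resolvent t \<theta>\<bar> * ennreal \<bar>K \<theta> \<phi>\<bar> \<partial>M0 \<partial>M0)"
    by (rule M0M0.Fubini'[symmetric]) measurable
  also have "\<dots> = (\<integral>\<^sup>+\<theta>. (\<integral>\<^sup>+t. ennreal \<bar>resolvent t \<theta>\<bar> \<partial>M0) * ennreal \<bar>K \<theta> \<phi>\<bar> \<partial>M0)"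
    by (intro nn_integral_cong nn_integral_multc)
      (auto intro!: measurable_compose[OF _ measurable_ennreal] borel_measurable_abs resolvent_col_measurable)
  also have "\<dots> \<le> (\<integral>\<^sup>+\<theta>. ennreal (q / (1 - q)) * ennreal \<bar>K \<theta> \<phi>\<bar> \<partial>M0)"
    by (intro nn_integral_mono mult_right_mono resolvent_col_L1) auto
  also have "\<dots> = ennreal (q / (1 - q)) * (\<integral>\<^sup>+\<theta>. ennreal \<bar>K \<theta> \<phi>\<bar> \<partial>M0)"
    by (rule nn_integral_cmult) measurable
  also have "\<dots> \<le> ennreal (q / (1 - q)) * ennreal q"
    by (intro mult_left_mono col_L1 assms) auto
  also have "\<dots> = ennreal (q / (1 - q) * q)"
    by (rule ennreal_mult[symmetric]) (use q_nonneg q_less_1 in auto)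
  finally show ?thesis .
qed

lemma integrable_resolvent_K_product:
  assumes R': "kernel_measurable R'" and "t \<ge> 0" "s \<ge> 0"
    and finite: "(\<integral>\<^sup>+\<phi>. ennreal \<bar>abs_resolvent_K t \<phi>\<bar> * ennreal \<bar>R' \<phi> s\<bar> \<partial>M0) < \<infinity>"
  shows "integrable (M0 \<Otimes>\<^sub>M M0) (\<lambda>(\<theta>, \<phi>). resolvent t \<theta> * (K \<theta> \<phi> * R' \<phi> s))"
proof (subst integrable_iff_bounded, intro conjI)
  have [measurable]: "(\<lambda>\<theta>. resolvent t \<theta>) \<in> borel_measurable M0" "(\<lambda>\<phi>. R' \<phi> s) \<in> borel_measurable M0"
    using resolvent_row_measurable kernel_measurable_col[OF R'] assms(2,3) by auto
  show "(\<lambda>(\<theta>, \<phi>). resolvent t \<theta> * (K \<theta> \<phi> * R' \<phi> s)) \<in> borel_measurable (M0 \<Otimes>\<^sub>M M0)"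
    unfolding split_beta' by measurable
  have "(\<integral>\<^sup>+z. ennreal (norm ((\<lambda>(\<theta>, \<phi>). resolvent t \<theta> * (K \<theta> \<phi> * R' \<phi> s)) z)) \<partial>(M0 \<Otimes>\<^sub>M M0))
      = (\<integral>\<^sup>+\<theta>. \<integral>\<^sup>+\<phi>. ennreal \<bar>resolvent t \<theta>\<bar> * ennreal \<bar>K \<theta> \<phi>\<bar> * ennreal \<bar>R' \<phi> s\<bar> \<partial>M0 \<partial>M0)"
    by (subst M0.nn_integral_fst[symmetric]) (auto simp: abs_mult ennreal_mult mult_ac intro!: nn_integral_cong)
  also have "\<dots> = (\<integral>\<^sup>+\<phi>. \<integral>\<^sup>+\<theta>. ennreal \<bar>resolvent t \<theta>\<bar> * ennreal \<bar>K \<theta> \<phi>\<bar> * ennreal \<bar>R' \<phi> s\<bar> \<partial>M0 \<partial>M0)"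
    by (rule M0M0.Fubini'[symmetric]) measurable
  also have "\<dots> = (\<integral>\<^sup>+\<phi>. ennreal \<bar>abs_resolvent_K t \<phi>\<bar> * ennreal \<bar>R' \<phi> s\<bar> \<partial>M0)"
  proof (rule nn_integral_cong)
    fix \<phi>
    assume "\<phi> \<in> space M0"
    then have "\<phi> \<ge> 0"
      by simp
    have [measurable]: "(\<lambda>\<theta>. K \<theta> \<phi>) \<in> borel_measurable M0"
      by (rule K_col_measurable[OF \<open>\<phi> \<ge> 0\<close>])
    show "(\<integral>\<^sup>+\<theta>. ennreal \<bar>resolvent t \<theta>\<bar> * ennreal \<bar>K \<theta> \<phi>\<bar> * ennreal \<bar>R' \<phi> s\<bar> \<partial>M0)
      = ennreal \<bar>abs_resolvent_K t \<phi>\<bar> * ennreal \<bar>R' \<phi> s\<bar>"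
      by (subst nn_integral_multc) (auto simp: ennreal_abs_resolvent_K[OF \<open>t \<ge> 0\<close> \<open>\<phi> \<ge> 0\<close>])
  qed
  finally show "(\<integral>\<^sup>+z. ennreal (norm ((\<lambda>(\<theta>, \<phi>). resolvent t \<theta> * (K \<theta> \<phi> * R' \<phi> s)) z)) \<partial>(M0 \<Otimes>\<^sub>M M0)) < \<infinity>"
    using finite by simp
qed

(* Apply the resolvent to R' + K R' = K and use resolvent + resolvent K = K; the finiteness
   hypotheses justify the Fubini step. *)
lemma resolvent_unique_at:
  assumes R': "kernel_measurable R'" and t: "t \<ge> 0" and s: "s \<ge> 0"
    and at: "integrable M0 (\<lambda>\<theta>. K t \<theta> * R' \<theta> s)" "R' t s + (\<integral>\<theta>. K t \<theta> * R' \<theta> s \<partial>M0) = K t s"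
    and below: "AE \<theta> in M0. integrable M0 (\<lambda>\<phi>. K \<theta> \<phi> * R' \<phi> s) \<and>
      R' \<theta> s + (\<integral>\<phi>. K \<theta> \<phi> * R' \<phi> s \<partial>M0) = K \<theta> s"
    and finite: "(\<integral>\<^sup>+\<theta>. ennreal \<bar>resolvent t \<theta>\<bar> * ennreal \<bar>R' \<theta> s\<bar> \<partial>M0) < \<infinity>"
      "(\<integral>\<^sup>+\<phi>. ennreal \<bar>abs_resolvent_K t \<phi>\<bar> * ennreal \<bar>R' \<phi> s\<bar> \<partial>M0) < \<infinity>"
  shows "R' t s = resolvent t s"
proof -
  have [measurable]: "(\<lambda>z. R' (fst z) (snd z)) \<in> borel_measurable (M0 \<Otimes>\<^sub>M M0)"
    "(\<lambda>\<theta>. R' \<theta> s) \<in> borel_measurable M0" "(\<lambda>\<theta>. resolvent t \<theta>) \<in> borel_measurable M0"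
    "(\<lambda>\<theta>. K \<theta> s) \<in> borel_measurable M0"
    using R' kernel_measurable_col[OF R' s] resolvent_row_measurable[OF t] K_col_measurable[OF s]
    by (simp_all add: kernel_measurable_def)
  have RR': "integrable M0 (\<lambda>\<theta>. resolvent t \<theta> * R' \<theta> s)"
    using finite(1) by (subst integrable_iff_bounded) (auto simp: abs_mult ennreal_mult)
  note product = integrable_resolvent_K_product[OF R' t s finite(2)]
  have "K t s - resolvent t s = (\<integral>\<theta>. resolvent t \<theta> * K \<theta> s \<partial>M0)"
    using resolvent_right(2)[OF t s] by simp
  also have "\<dots> = (\<integral>\<theta>. resolvent t \<theta> * R' \<theta> s + (\<integral>\<phi>. resolvent t \<theta> * (K \<theta> \<phi> * R' \<phi> s) \<partial>M0) \<partial>M0)"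
  proof (rule integral_cong_AE)
    show "(\<lambda>\<theta>. resolvent t \<theta> * K \<theta> s) \<in> borel_measurable M0"
      by measurable
    show "(\<lambda>\<theta>. resolvent t \<theta> * R' \<theta> s + (\<integral>\<phi>. resolvent t \<theta> * (K \<theta> \<phi> * R' \<phi> s) \<partial>M0))
      \<in> borel_measurable M0"
      using borel_measurable_integrable[OF M0M0.integrable_fst[OF product]] by measurable
    show "AE \<theta> in M0. resolvent t \<theta> * K \<theta> s
      = resolvent t \<theta> * R' \<theta> s + (\<integral>\<phi>. resolvent t \<theta> * (K \<theta> \<phi> * R' \<phi> s) \<partial>M0)"
      using below by eventually_elim (simp add: distrib_left[symmetric])
  qed
  also have "\<dots> = (\<integral>\<theta>. resolvent t \<theta> * R' \<theta> s \<partial>M0)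
      + (\<integral>\<theta>. (\<integral>\<phi>. resolvent t \<theta> * (K \<theta> \<phi> * R' \<phi> s) \<partial>M0) \<partial>M0)"
    by (rule Bochner_Integration.integral_add[OF RR' M0M0.integrable_fst[OF product]])
  also have "(\<integral>\<theta>. (\<integral>\<phi>. resolvent t \<theta> * (K \<theta> \<phi> * R' \<phi> s) \<partial>M0) \<partial>M0)
      = (\<integral>\<phi>. (\<integral>\<theta>. resolvent t \<theta> * K \<theta> \<phi> \<partial>M0) * R' \<phi> s \<partial>M0)"
    using M0M0.Fubini_integral[OF product]
    by (simp only: mult.assoc[symmetric] integral_mult_left_zero)
  also have "\<dots> = (\<integral>\<phi>. (K t \<phi> - resolvent t \<phi>) * R' \<phi> s \<partial>M0)"
  proof (rule Bochner_Integration.integral_cong[OF refl])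
    fix \<phi>
    assume "\<phi> \<in> space M0"
    then have "(\<integral>\<theta>. resolvent t \<theta> * K \<theta> \<phi> \<partial>M0) = K t \<phi> - resolvent t \<phi>"
      using resolvent_right(2)[OF t, of \<phi>] by simp
    then show "(\<integral>\<theta>. resolvent t \<theta> * K \<theta> \<phi> \<partial>M0) * R' \<phi> s = (K t \<phi> - resolvent t \<phi>) * R' \<phi> s"
      by simp
  qed
  also have "\<dots> = (\<integral>\<phi>. K t \<phi> * R' \<phi> s \<partial>M0) - (\<integral>\<phi>. resolvent t \<phi> * R' \<phi> s \<partial>M0)"
    using Bochner_Integration.integral_diff[OF at(1) RR'] by (simp add: algebra_simps)
  finally show ?thesis
    using at(2) by simp
qed

lemma resolvent_unique_AE:
  assumes F: "fredholm_L2 R'"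
    and identity: "AE z in M0 \<Otimes>\<^sub>M M0. integrable M0 (\<lambda>\<theta>. K (fst z) \<theta> * R' \<theta> (snd z)) \<and>
      R' (fst z) (snd z) + (\<integral>\<theta>. K (fst z) \<theta> * R' \<theta> (snd z) \<partial>M0) = K (fst z) (snd z)"
  shows "AE z in M0 \<Otimes>\<^sub>M M0. R' (fst z) (snd z) = resolvent (fst z) (snd z)"
proof -
  have R': "kernel_measurable R'"
    using F by (rule fredholm_L2_kernel_measurable)
  then have [measurable]: "(\<lambda>z. R' (fst z) (snd z)) \<in> borel_measurable (M0 \<Otimes>\<^sub>M M0)"
    by (simp add: kernel_measurable_def)
  define H where "H t s \<longleftrightarrow> integrable M0 (\<lambda>\<theta>. K t \<theta> * R' \<theta> s) \<and>
    R' t s + (\<integral>\<theta>. K t \<theta> * R' \<theta> s \<partial>M0) = K t s" for t s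
  have H: "AE z in M0 \<Otimes>\<^sub>M M0. H (fst z) (snd z)"
    using identity by (simp add: H_def)
  have "AE t in M0. AE s in M0. (\<integral>\<^sup>+\<theta>. ennreal \<bar>resolvent t \<theta>\<bar> * ennreal \<bar>R' \<theta> s\<bar> \<partial>M0) < \<infinity>"
    using q_nonneg q_less_1
    by (intro fredholm_L2_AE_AE_compose_finite[OF F kernel_measurable_resolvent _ _
          resolvent_row_L1 resolvent_col_L1]) auto
  moreover have "AE t in M0. AE s in M0. (\<integral>\<^sup>+\<phi>. ennreal \<bar>abs_resolvent_K t \<phi>\<bar> * ennreal \<bar>R' \<phi> s\<bar> \<partial>M0) < \<infinity>"
    using q_nonneg q_less_1
    by (intro fredholm_L2_AE_AE_compose_finite[OF F kernel_measurable_abs_resolvent_K _ _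
          abs_resolvent_K_row_L1 abs_resolvent_K_col_L1]) auto
  moreover have "AE t in M0. AE s in M0. H t s"
    using M0M0.AE_pair[OF H] by simp
  ultimately have "AE t in M0. AE s in M0. R' t s = resolvent t s"
    using AE_space
  proof eventually_elim
    case (elim t)
    show ?case
      using elim(1-3) AE_space AE_pair_M0_swap[OF H]
    proof eventually_elim
      case (elim s)
      with \<open>t \<in> space M0\<close> show ?case
        by (intro resolvent_unique_at[OF R']) (auto simp: H_def)
    qed
  qed
  moreover have "{z \<in> space (M0 \<Otimes>\<^sub>M M0). R' (fst z) (snd z) = resolvent (fst z) (snd z)} \<in> sets (M0 \<Otimes>\<^sub>M M0)"
    unfolding pred_def[symmetric] by measurable
  ultimately show ?thesis
    using M0M0.AE_pair_iff[of "\<lambda>t s. R' t s = resolvent t s"] by simp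
qed

lemma fredholm_L2_K: "fredholm_L2 K"
  by (rule fredholm_L2I[OF measurable_K q_nonneg row_L1 col_L1])

lemma fredholm_resolvent_L2w_resolvent: "fredholm_resolvent_L2w 0 K resolvent"
proof -
  have "fredholm_L2 resolvent"
    using q_nonneg q_less_1
    by (intro fredholm_L2I[OF kernel_measurable_resolvent _ resolvent_row_L1 resolvent_col_L1]) auto
  moreover have "AE z in M0 \<Otimes>\<^sub>M M0.
      integrable M0 (\<lambda>\<theta>. K (fst z) \<theta> * resolvent \<theta> (snd z)) \<and>
      integrable M0 (\<lambda>\<theta>. resolvent (fst z) \<theta> * K \<theta> (snd z)) \<and>
      resolvent (fst z) (snd z) + (\<integral>\<theta>. K (fst z) \<theta> * resolvent \<theta> (snd z) \<partial>M0) = K (fst z) (snd z) \<and>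
      resolvent (fst z) (snd z) + (\<integral>\<theta>. resolvent (fst z) \<theta> * K \<theta> (snd z) \<partial>M0) = K (fst z) (snd z)"
    by (intro AE_I2) (auto simp: space_pair_measure resolvent_left resolvent_right)
  ultimately show ?thesis
    by (simp add: fredholm_resolvent_L2w_def fredholm_L2w_def)
qed

lemma fredholm_resolvent_L2w_unique:
  assumes "fredholm_resolvent_L2w 0 K R'"
  shows "AE z in M0 \<Otimes>\<^sub>M M0. R' (fst z) (snd z) = resolvent (fst z) (snd z)"
proof (rule resolvent_unique_AE)
  show "fredholm_L2 R'"
    using assms by (simp add: fredholm_resolvent_L2w_def fredholm_L2w_def)
  show "AE z in M0 \<Otimes>\<^sub>M M0. integrable M0 (\<lambda>\<theta>. K (fst z) \<theta> * R' \<theta> (snd z)) \<and>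
      R' (fst z) (snd z) + (\<integral>\<theta>. K (fst z) \<theta> * R' \<theta> (snd z) \<partial>M0) = K (fst z) (snd z)"
    using assms unfolding fredholm_resolvent_L2w_def by (auto elim: AE_mp intro: AE_I2)
qed

lemma solves_fredholm_resolvent:
  assumes "Lpw 2 0 f"
  shows "Lpw 2 0 (\<lambda>t. f t - (\<integral>s. resolvent t s * f s \<partial>M0))"
    and "solves_fredholm K f (\<lambda>t. f t - (\<integral>s. resolvent t s * f s \<partial>M0))"
proof -
  have f [measurable]: "f \<in> borel_measurable M0" and f_L2: "(\<integral>\<^sup>+t. ennreal ((f t)\<^sup>2) \<partial>M0) < \<infinity>"
    using assms by (simp_all add: Lpw_2_0_iff)
  then obtain F where F: "(\<integral>\<^sup>+t. ennreal ((f t)\<^sup>2) \<partial>M0) = ennreal F" "F \<ge> 0"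
    using less_top_ennreal by auto
  have "(\<lambda>t. \<integral>s. resolvent t s * f s \<partial>M0) \<in> borel_measurable M0"
    by measurable
  note nn_integral_power2_diff_finite[OF f this f_L2 nn_integral_resolvent_apply_power2_finite[OF f f_L2]]
  moreover have "(\<lambda>t. f t - (\<integral>s. resolvent t s * f s \<partial>M0)) \<in> borel_measurable M0"
    by measurable
  ultimately show "Lpw 2 0 (\<lambda>t. f t - (\<integral>s. resolvent t s * f s \<partial>M0))"
    unfolding Lpw_2_0_iff by blast
  show "solves_fredholm K f (\<lambda>t. f t - (\<integral>s. resolvent t s * f s \<partial>M0))"
    unfolding solves_fredholm_def using F resolvent_solution[of f F]
    by (intro AE_I2) auto
qed

lemma solves_fredholm_unique:
  assumes "Lpw 2 0 f" "Lpw 2 0 y" and y: "solves_fredholm K f y"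
  shows "AE t in M0. y t = f t - (\<integral>s. resolvent t s * f s \<partial>M0)"
proof -
  have [measurable]: "f \<in> borel_measurable M0" "y \<in> borel_measurable M0"
    and "(\<integral>\<^sup>+t. ennreal ((y t)\<^sup>2) \<partial>M0) < \<infinity>"
    using assms by (simp_all add: Lpw_2_0_iff)
  then obtain Y where Y: "(\<integral>\<^sup>+t. ennreal ((y t)\<^sup>2) \<partial>M0) = ennreal Y" "Y \<ge> 0"
    using less_top_ennreal by auto
  have equation: "AE t in M0. y t + (\<integral>s. K t s * y s \<partial>M0) = f t"
    using y unfolding solves_fredholm_def by (auto elim: AE_mp intro: AE_I2)
  have "(\<integral>s. resolvent t s * f s \<partial>M0) = (\<integral>s. K t s * y s \<partial>M0)" if "t \<in> space M0" for t
  proof -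
    have [measurable]: "(\<lambda>s. resolvent t s) \<in> borel_measurable M0"
      using resolvent_row_measurable that by simp
    have "(\<integral>s. resolvent t s * f s \<partial>M0) = (\<integral>\<theta>. resolvent t \<theta> * (y \<theta> + (\<integral>s. K \<theta> s * y s \<partial>M0)) \<partial>M0)"
      using equation by (intro integral_cong_AE) (measurable, auto elim: AE_mp intro: AE_I2)
    also have "\<dots> = (\<integral>s. K t s * y s \<partial>M0)"
      using Y that by (intro integral_resolvent_equation) auto
    finally show ?thesis .
  qed
  with equation show ?thesis
    by (auto elim: AE_mp intro: AE_I2)
qed

end

section \<open>Exponential weights\<close>

lemma Lpw_weight: "Lpw p beta f \<longleftrightarrow> Lpw p 0 (\<lambda>t. exp (beta * t) * f t)"
proof -
  note [measurable] = measurable_ident_M0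
  have "f \<in> borel_measurable M0 \<longleftrightarrow> (\<lambda>t. exp (beta * t) * f t) \<in> borel_measurable M0"
  proof
    assume [measurable]: "f \<in> borel_measurable M0"
    show "(\<lambda>t. exp (beta * t) * f t) \<in> borel_measurable M0"
      by measurable
  next
    assume [measurable]: "(\<lambda>t. exp (beta * t) * f t) \<in> borel_measurable M0"
    have "(\<lambda>t. exp (- beta * t) * (exp (beta * t) * f t)) \<in> borel_measurable M0"
      by measurable
    then show "f \<in> borel_measurable M0"
      by (simp add: mult.assoc[symmetric] exp_add[symmetric])
  qed
  moreover have "exp (p * beta * t) * \<bar>f t\<bar> powr p = exp (p * 0 * t) * \<bar>exp (beta * t) * f t\<bar> powr p" for t
    by (simp add: abs_mult powr_mult exp_powr_real mult_ac)
  ultimately show ?thesis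
    by (simp add: Lpw_def)
qed

lemma solves_fredholm_weight:
  "solves_fredholm k a x \<longleftrightarrow>
    solves_fredholm (\<lambda>t s. exp (eta * (t - s)) * k t s) (\<lambda>t. exp (eta * t) * a t) (\<lambda>t. exp (eta * t) * x t)"
proof -
  have product: "exp (eta * (t - s)) * k t s * (exp (eta * s) * x s) = exp (eta * t) * (k t s * x s)" for t s
    by (simp add: mult_ac exp_add[symmetric] algebra_simps)
  have "(integrable M0 (\<lambda>s. k t s * x s) \<and> x t + (\<integral>s. k t s * x s \<partial>M0) = a t) \<longleftrightarrow>
      (integrable M0 (\<lambda>s. exp (eta * (t - s)) * k t s * (exp (eta * s) * x s)) \<and>
       exp (eta * t) * x t + (\<integral>s. exp (eta * (t - s)) * k t s * (exp (eta * s) * x s) \<partial>M0) = exp (eta * t) * a t)"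
    for t
    unfolding product by (simp add: distrib_left[symmetric])
  then show ?thesis
    unfolding solves_fredholm_def by simp
qed

lemma fredholm_resolvent_L2w_weight:
  "fredholm_resolvent_L2w eta k r \<longleftrightarrow>
    fredholm_resolvent_L2w 0 (\<lambda>t s. exp (eta * (t - s)) * k t s) (\<lambda>t s. exp (eta * (t - s)) * r t s)"
proof -
  have product: "exp (eta * (t - \<theta>)) * u t \<theta> * (exp (eta * (\<theta> - s)) * v \<theta> s)
      = exp (eta * (t - s)) * (u t \<theta> * v \<theta> s)" for u v :: "real \<Rightarrow> real \<Rightarrow> real" and t \<theta> s
    by (simp add: mult_ac exp_add[symmetric] algebra_simps)
  have "(integrable M0 (\<lambda>\<theta>. k t \<theta> * r \<theta> s) \<and> integrable M0 (\<lambda>\<theta>. r t \<theta> * k \<theta> s) \<and>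
      r t s + (\<integral>\<theta>. k t \<theta> * r \<theta> s \<partial>M0) = k t s \<and> r t s + (\<integral>\<theta>. r t \<theta> * k \<theta> s \<partial>M0) = k t s) \<longleftrightarrow>
    (integrable M0 (\<lambda>\<theta>. exp (eta * (t - \<theta>)) * k t \<theta> * (exp (eta * (\<theta> - s)) * r \<theta> s)) \<and>
      integrable M0 (\<lambda>\<theta>. exp (eta * (t - \<theta>)) * r t \<theta> * (exp (eta * (\<theta> - s)) * k \<theta> s)) \<and>
      exp (eta * (t - s)) * r t s
        + (\<integral>\<theta>. exp (eta * (t - \<theta>)) * k t \<theta> * (exp (eta * (\<theta> - s)) * r \<theta> s) \<partial>M0)
        = exp (eta * (t - s)) * k t s \<and>
      exp (eta * (t - s)) * r t s
        + (\<integral>\<theta>. exp (eta * (t - \<theta>)) * r t \<theta> * (exp (eta * (\<theta> - s)) * k \<theta> s) \<partial>M0)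
        = exp (eta * (t - s)) * k t s)"
    for t s
    unfolding product by (simp add: distrib_left[symmetric])
  then show ?thesis
    unfolding fredholm_resolvent_L2w_def fredholm_L2w_def by simp
qed

locale weighted_contraction_kernel = contraction_kernel +
  fixes eta :: real and k :: "real \<Rightarrow> real \<Rightarrow> real"
  assumes K_eq: "K = (\<lambda>t s. exp (eta * (t - s)) * k t s)"
begin

definition weighted_resolvent :: "real \<Rightarrow> real \<Rightarrow> real" where
  "weighted_resolvent t s = exp (- eta * (t - s)) * resolvent t s"

lemma resolvent_eq: "resolvent = (\<lambda>t s. exp (eta * (t - s)) * weighted_resolvent t s)"
  by (simp add: weighted_resolvent_def fun_eq_iff mult.assoc[symmetric] exp_add[symmetric])

lemma fredholm_L2w_k: "fredholm_L2w eta k"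
  using fredholm_L2_K unfolding fredholm_L2w_def K_eq .

lemma fredholm_resolvent_L2w_weighted_resolvent: "fredholm_resolvent_L2w eta k weighted_resolvent"
  unfolding fredholm_resolvent_L2w_weight[of eta] K_eq[symmetric] resolvent_eq[symmetric]
  by (rule fredholm_resolvent_L2w_resolvent)

lemma weighted_resolvent_unique:
  assumes "fredholm_resolvent_L2w eta k r"
  shows "AE z in M0 \<Otimes>\<^sub>M M0. r (fst z) (snd z) = weighted_resolvent (fst z) (snd z)"
proof -
  have "fredholm_resolvent_L2w 0 K (\<lambda>t s. exp (eta * (t - s)) * r t s)"
    using assms unfolding fredholm_resolvent_L2w_weight[of eta] K_eq .
  from fredholm_resolvent_L2w_unique[OF this] show ?thesis
    by eventually_elim (simp add: resolvent_eq)
qed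

lemma weighted_solution_eq:
  "exp (eta * t) * (a t - (\<integral>s. weighted_resolvent t s * a s \<partial>M0))
    = exp (eta * t) * a t - (\<integral>s. resolvent t s * (exp (eta * s) * a s) \<partial>M0)"
proof -
  have "(\<lambda>s. resolvent t s * (exp (eta * s) * a s)) = (\<lambda>s. exp (eta * t) * (weighted_resolvent t s * a s))"
    by (simp add: fun_eq_iff resolvent_eq mult_ac exp_add[symmetric] algebra_simps)
  then show ?thesis
    by (simp add: right_diff_distrib)
qed

lemma weighted_solution:
  assumes "Lpw 2 eta a"
  defines "x \<equiv> \<lambda>t. a t - (\<integral>s. weighted_resolvent t s * a s \<partial>M0)"
  shows "Lpw 2 eta x" and "solves_fredholm k a x"
proof -
  have "Lpw 2 0 (\<lambda>t. exp (eta * t) * a t)"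
    using assms(1) by (simp add: Lpw_weight[of 2 eta])
  note weighted = solves_fredholm_resolvent[OF this]
  have weighted_x: "(\<lambda>t. exp (eta * t) * x t) = (\<lambda>t. exp (eta * t) * a t - (\<integral>s. resolvent t s * (exp (eta * s) * a s) \<partial>M0))"
    by (simp add: x_def fun_eq_iff weighted_solution_eq)
  show "Lpw 2 eta x"
    using weighted(1) by (simp add: Lpw_weight[of 2 eta x] weighted_x)
  show "solves_fredholm k a x"
    using weighted(2) by (simp add: solves_fredholm_weight[of k a x eta] weighted_x K_eq[symmetric])
qed

lemma weighted_solution_unique:
  assumes "Lpw 2 eta a" "Lpw 2 eta y" "solves_fredholm k a y"
  shows "AE t in M0. y t = a t - (\<integral>s. weighted_resolvent t s * a s \<partial>M0)"
proof -
  have "Lpw 2 0 (\<lambda>t. exp (eta * t) * a t)" "Lpw 2 0 (\<lambda>t. exp (eta * t) * y t)"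
    "solves_fredholm K (\<lambda>t. exp (eta * t) * a t) (\<lambda>t. exp (eta * t) * y t)"
    using assms by (simp_all add: Lpw_weight[of 2 eta] solves_fredholm_weight[of k a y eta] K_eq)
  from solves_fredholm_unique[OF this] show ?thesis
    by eventually_elim (simp add: weighted_solution_eq[symmetric])
qed

theorem weighted_fredholm_resolvent:
  "fredholm_L2w eta k
    \<and> (\<exists>r. fredholm_resolvent_L2w eta k r
        \<and> (\<forall>r'. fredholm_resolvent_L2w eta k r'
               \<longrightarrow> (AE z in M0 \<Otimes>\<^sub>M M0. r' (fst z) (snd z) = r (fst z) (snd z)))
        \<and> (\<forall>a. Lpw 2 eta a \<longrightarrow>
             (\<exists>x. Lpw 2 eta x \<and> solves_fredholm k a x
                \<and> (\<forall>y. Lpw 2 eta y \<and> solves_fredholm k a y \<longrightarrow> (AE t in M0. y t = x t))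
                \<and> (AE t in M0. x t = a t - (\<integral>s. r t s * a s \<partial>M0)))))"
  using fredholm_L2w_k fredholm_resolvent_L2w_weighted_resolvent weighted_resolvent_unique
    weighted_solution weighted_solution_unique
  by blast

end

section \<open>The kernel k_lam\<close>

lemma measurable_g_lam [measurable]: "g_lam b c gamma alpha delta lam \<in> borel_measurable borel"
proof -
  have "sets (borel \<Otimes>\<^sub>M lborel) = sets (borel \<Otimes>\<^sub>M (borel :: real measure))"
    by (rule sets_pair_measure_cong) simp_all
  then have "(\<lambda>(\<tau>, \<theta>). indicator {0<..} \<theta> *\<^sub>R (exp (- lam * \<theta>) * \<theta> powr (alpha - 1) * (\<theta> + \<tau>) powr (alpha - 1)))
      \<in> borel_measurable (borel \<Otimes>\<^sub>M (lborel :: real measure))"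
    by (subst measurable_cong_sets[OF _ refl]) (assumption, unfold split_beta' indicator_def, measurable)
  then have [measurable]: "(\<lambda>\<tau>::real. LINT \<theta>:{0<..}|lborel. exp (- lam * \<theta>) * \<theta> powr (alpha - 1) * (\<theta> + \<tau>) powr (alpha - 1))
      \<in> borel_measurable borel"
    unfolding set_lebesgue_integral_def by (rule lborel.borel_measurable_lebesgue_integral)
  show ?thesis
    unfolding g_lam_def by measurable
qed

lemma nn_integral_M0_le_reflect:
  fixes F :: "real \<Rightarrow> ennreal"
  assumes [measurable]: "H \<in> borel_measurable borel" and le: "\<And>\<theta>. \<theta> \<noteq> t \<Longrightarrow> F \<theta> \<le> H (t - \<theta>)"
  shows "(\<integral>\<^sup>+\<theta>. F \<theta> \<partial>M0) \<le> (\<integral>\<^sup>+x. H x \<partial>lborel)"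
proof -
  have "(\<integral>\<^sup>+\<theta>. F \<theta> \<partial>M0) = (\<integral>\<^sup>+\<theta>. F \<theta> * indicator {0..} \<theta> \<partial>lborel)"
    by (rule nn_integral_M0)
  also have "\<dots> \<le> (\<integral>\<^sup>+\<theta>. H (t + (-1) * \<theta>) \<partial>lborel)"
    using AE_lborel_singleton[of t]
    by (rule nn_integral_mono_AE[OF eventually_mono]) (auto simp: indicator_def le)
  also have "\<dots> = (\<integral>\<^sup>+x. H x \<partial>lborel)"
    using nn_integral_real_affine[of H "-1" t] by simp
  finally show ?thesis .
qed

lemma nn_integral_M0_le_shift:
  fixes F :: "real \<Rightarrow> ennreal"
  assumes [measurable]: "H \<in> borel_measurable borel" and le: "\<And>\<theta>. \<theta> \<noteq> s \<Longrightarrow> F \<theta> \<le> H (\<theta> - s)"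
  shows "(\<integral>\<^sup>+\<theta>. F \<theta> \<partial>M0) \<le> (\<integral>\<^sup>+x. H x \<partial>lborel)"
proof -
  have "(\<integral>\<^sup>+\<theta>. F \<theta> \<partial>M0) = (\<integral>\<^sup>+\<theta>. F \<theta> * indicator {0..} \<theta> \<partial>lborel)"
    by (rule nn_integral_M0)
  also have "\<dots> \<le> (\<integral>\<^sup>+\<theta>. H (- s + 1 * \<theta>) \<partial>lborel)"
    using AE_lborel_singleton[of s]
    by (rule nn_integral_mono_AE[OF eventually_mono]) (auto simp: indicator_def le)
  also have "\<dots> = (\<integral>\<^sup>+x. H x \<partial>lborel)"
    using nn_integral_real_affine[of H 1 "- s"] by simp
  finally show ?thesis .
qed

lemma nn_integral_lborel_uminus:
  fixes f :: "real \<Rightarrow> ennreal"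
  assumes [measurable]: "f \<in> borel_measurable borel"
  shows "(\<integral>\<^sup>+x. f (- x) \<partial>lborel) = (\<integral>\<^sup>+x. f x \<partial>lborel)"
  using nn_integral_real_affine[of f "-1" 0] by simp

locale weighted_k_lam =
  fixes b c gamma alpha delta lam mu :: real
  assumes c: "c \<noteq> 0" and gamma: "gamma > 0" and alpha: "1/2 < alpha" "alpha \<le> 1"
    and delta: "delta \<ge> 0" and mu: "mu > 0" and lam: "lam \<ge> 2 * mu"
begin

definition "J \<tau> = (LINT \<theta>:{0<..}|lborel. exp (- lam * \<theta>) * \<theta> powr (alpha - 1) * (\<theta> + \<tau>) powr (alpha - 1))"
definition "C = c\<^sup>2 * gamma + b\<^sup>2 * exp (- lam * delta)"
definition "A = C * lam powr (- alpha) / Gamma alpha"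
definition "B = \<bar>b\<bar> / Gamma alpha"
definition "G \<tau> = A * pospow \<tau> (alpha - 1) + B * pospow (\<tau> - delta) (alpha - 1)"
definition "Psi \<tau> = exp (- mu * \<tau>) * G \<tau>"
definition "Phi \<tau> = Psi \<tau> + Psi (- \<tau>)"
definition "K t s = exp (- mu * (t - s)) * k_lam b c gamma alpha delta lam t s"
definition "q = 2 * ((C * lam powr (- alpha) + \<bar>b\<bar> * exp (- mu * delta)) * mu powr (- alpha))"
definition "P = enn2real (\<integral>\<^sup>+x. ennreal ((Phi x)\<^sup>2) \<partial>lborel)"

lemma lam_pos: "lam > 0"
  using mu lam by simp

lemma alpha_pos: "alpha > 0"
  using alpha by simp

lemma Gamma_alpha_pos: "Gamma alpha > 0"
  using alpha_pos by (rule Gamma_real_pos)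

lemma C_pos: "C > 0"
  unfolding C_def using c gamma by (simp add: add_pos_nonneg)

lemma A_nonneg: "A \<ge> 0"
  unfolding A_def using C_pos Gamma_alpha_pos by simp

lemma B_nonneg: "B \<ge> 0"
  unfolding B_def using Gamma_alpha_pos by simp

lemma G_nonneg: "G \<tau> \<ge> 0"
  unfolding G_def using A_nonneg B_nonneg by (simp add: pospow_nonneg)

lemma Psi_nonneg: "Psi \<tau> \<ge> 0"
  unfolding Psi_def using G_nonneg by simp

lemma q_nonneg: "q \<ge> 0"
  unfolding q_def using C_pos lam_pos mu by simp

lemma measurable_G [measurable]: "G \<in> borel_measurable borel"
  unfolding G_def by measurable

lemma measurable_Psi [measurable]: "Psi \<in> borel_measurable borel"
  unfolding Psi_def by measurable

lemma measurable_Phi [measurable]: "Phi \<in> borel_measurable borel"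
  unfolding Phi_def by measurable

lemma kernel_measurable_K: "kernel_measurable K"
  unfolding kernel_measurable_def K_def k_lam_def by measurable

lemma g_lam_eq:
  "g_lam b c gamma alpha delta lam \<tau> = C / (Gamma alpha)\<^sup>2 * J \<tau> - b / Gamma alpha * pospow (\<tau> - delta) (alpha - 1)"
  unfolding g_lam_def J_def C_def by simp

lemma abs_J_le:
  assumes "\<tau> > 0"
  shows "\<bar>J \<tau>\<bar> \<le> Gamma alpha * lam powr (- alpha) * \<tau> powr (alpha - 1)"
proof -
  define f where "f \<theta> = exp (- lam * \<theta>) * \<theta> powr (alpha - 1) * (\<theta> + \<tau>) powr (alpha - 1)" for \<theta>
  have "ennreal \<bar>J \<tau>\<bar> \<le> (\<integral>\<^sup>+\<theta>. ennreal \<bar>indicator {0<..} \<theta> *\<^sub>R f \<theta>\<bar> \<partial>lborel)"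
    unfolding J_def f_def set_lebesgue_integral_def by (rule ennreal_abs_integral_le)
  also have "\<dots> \<le> (\<integral>\<^sup>+\<theta>. ennreal (exp (- lam * \<theta>) * pospow (\<theta> - 0) (alpha - 1)) * ennreal (\<tau> powr (alpha - 1)) \<partial>lborel)"
  proof (rule nn_integral_mono)
    fix \<theta> :: real
    have "f \<theta> \<le> exp (- lam * \<theta>) * \<theta> powr (alpha - 1) * \<tau> powr (alpha - 1)" if "\<theta> > 0"
      unfolding f_def using powr_mono2'[of "alpha - 1" \<tau> "\<theta> + \<tau>"] alpha(2) assms that
      by (intro mult_left_mono) auto
    then show "ennreal \<bar>indicator {0<..} \<theta> *\<^sub>R f \<theta>\<bar>
        \<le> ennreal (exp (- lam * \<theta>) * pospow (\<theta> - 0) (alpha - 1)) * ennreal (\<tau> powr (alpha - 1))"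
      using assms by (cases "\<theta> > 0") (auto simp: f_def pospow_def ennreal_mult[symmetric] intro!: ennreal_leI)
  qed
  also have "\<dots> = (\<integral>\<^sup>+\<theta>. ennreal (exp (- lam * \<theta>) * pospow (\<theta> - 0) (alpha - 1)) \<partial>lborel) * ennreal (\<tau> powr (alpha - 1))"
    by (rule nn_integral_multc) measurable
  also have "\<dots> = ennreal (exp (- lam * 0) * Gamma alpha * lam powr (- alpha)) * ennreal (\<tau> powr (alpha - 1))"
    by (simp only: nn_integral_exp_pospow[OF lam_pos alpha_pos order.refl])
  also have "\<dots> = ennreal (Gamma alpha * lam powr (- alpha) * \<tau> powr (alpha - 1))"
    using Gamma_alpha_pos by (simp add: ennreal_mult[symmetric])
  finally show ?thesis
    using Gamma_alpha_pos by (simp add: ennreal_le_iff)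
qed

lemma abs_g_lam_le:
  assumes "\<tau> > 0"
  shows "\<bar>g_lam b c gamma alpha delta lam \<tau>\<bar> \<le> G \<tau>"
proof -
  have "\<bar>g_lam b c gamma alpha delta lam \<tau>\<bar>
      \<le> \<bar>C / (Gamma alpha)\<^sup>2 * J \<tau>\<bar> + \<bar>b / Gamma alpha * pospow (\<tau> - delta) (alpha - 1)\<bar>"
    unfolding g_lam_eq by (rule abs_triangle_ineq4)
  also have "\<dots> = C / (Gamma alpha)\<^sup>2 * \<bar>J \<tau>\<bar> + B * pospow (\<tau> - delta) (alpha - 1)"
    unfolding B_def using Gamma_alpha_pos C_pos pospow_nonneg[of "\<tau> - delta" "alpha - 1"]
    by (simp add: abs_mult)
  also have "\<dots> \<le> C / (Gamma alpha)\<^sup>2 * (Gamma alpha * lam powr (- alpha) * \<tau> powr (alpha - 1))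
      + B * pospow (\<tau> - delta) (alpha - 1)"
    using abs_J_le[OF assms] C_pos B_nonneg by (intro add_mono mult_left_mono) auto
  also have "\<dots> = G \<tau>"
    unfolding G_def A_def using assms Gamma_alpha_pos by (simp add: pospow_def power2_eq_square field_simps)
  finally show ?thesis .
qed

(* For s > t the factor exp (- lam (s - t)) in k_lam absorbs the growing weight
   exp (mu (s - t)), because lam >= 2 mu. *)
lemma abs_K_le_Phi:
  assumes "t \<noteq> s"
  shows "\<bar>K t s\<bar> \<le> Phi (t - s)"
proof (cases "s < t")
  case True
  then have "\<bar>K t s\<bar> = exp (- mu * (t - s)) * \<bar>g_lam b c gamma alpha delta lam (t - s)\<bar>"
    unfolding K_def k_lam_def by (simp add: abs_mult)
  also have "\<dots> \<le> Psi (t - s)"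
    unfolding Psi_def using abs_g_lam_le[of "t - s"] True by (intro mult_left_mono) auto
  also have "\<dots> \<le> Phi (t - s)"
    unfolding Phi_def using Psi_nonneg by simp
  finally show ?thesis .
next
  case False
  with assms have "t < s"
    by simp
  have "exp (- mu * (t - s)) * exp (- lam * (s - t)) = exp ((mu - lam) * (s - t))"
    by (simp add: exp_add[symmetric] algebra_simps)
  also have "\<dots> \<le> exp (- mu * (s - t))"
    using lam \<open>t < s\<close> by (subst exp_le_cancel_iff) (intro mult_right_mono, auto)
  finally have weight: "exp (- mu * (t - s)) * exp (- lam * (s - t)) \<le> exp (- mu * (s - t))" .
  have "\<bar>K t s\<bar> = exp (- mu * (t - s)) * exp (- lam * (s - t)) * \<bar>g_lam b c gamma alpha delta lam (s - t)\<bar>"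
    unfolding K_def k_lam_def using \<open>t < s\<close> by (simp add: abs_mult)
  also have "\<dots> \<le> exp (- mu * (s - t)) * G (s - t)"
    using abs_g_lam_le[of "s - t"] \<open>t < s\<close> G_nonneg[of "s - t"] by (intro mult_mono weight) auto
  also have "\<dots> = Psi (- (t - s))"
    by (simp add: Psi_def)
  also have "\<dots> \<le> Phi (t - s)"
    unfolding Phi_def using Psi_nonneg by simp
  finally show ?thesis .
qed

lemma power2_K_le_Phi: "t \<noteq> s \<Longrightarrow> (K t s)\<^sup>2 \<le> (Phi (t - s))\<^sup>2"
  using abs_K_le_Phi[of t s] by (metis abs_ge_zero power2_abs power_mono)

lemma nn_integral_Psi: "(\<integral>\<^sup>+x. ennreal (Psi x) \<partial>lborel) = ennreal (q / 2)"
proof -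
  define E where "E d x = ennreal (exp (- mu * x) * pospow (x - d) (alpha - 1))" for d x
  have "(\<integral>\<^sup>+x. ennreal (Psi x) \<partial>lborel) = (\<integral>\<^sup>+x. ennreal A * E 0 x + ennreal B * E delta x \<partial>lborel)"
    using A_nonneg B_nonneg
    by (intro nn_integral_cong)
      (simp add: Psi_def G_def E_def ennreal_mult[symmetric] ennreal_plus[symmetric] pospow_nonneg
        algebra_simps del: ennreal_plus)
  also have "\<dots> = ennreal A * (\<integral>\<^sup>+x. E 0 x \<partial>lborel) + ennreal B * (\<integral>\<^sup>+x. E delta x \<partial>lborel)"
    unfolding E_def by (subst nn_integral_add) (auto simp: nn_integral_cmult)
  also have "\<dots> = ennreal (A * (exp (- mu * 0) * Gamma alpha * mu powr (- alpha))
      + B * (exp (- mu * delta) * Gamma alpha * mu powr (- alpha)))"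
    using A_nonneg B_nonneg Gamma_alpha_pos
    unfolding E_def nn_integral_exp_pospow[OF mu alpha_pos order.refl] nn_integral_exp_pospow[OF mu alpha_pos delta]
    by (subst ennreal_plus) (auto simp: ennreal_mult)
  also have "A * (exp (- mu * 0) * Gamma alpha * mu powr (- alpha))
      + B * (exp (- mu * delta) * Gamma alpha * mu powr (- alpha)) = q / 2"
    unfolding A_def B_def q_def using Gamma_alpha_pos by (simp add: field_simps)
  finally show ?thesis .
qed

lemma nn_integral_Phi: "(\<integral>\<^sup>+x. ennreal (Phi x) \<partial>lborel) = ennreal q"
proof -
  have "(\<integral>\<^sup>+x. ennreal (Phi x) \<partial>lborel) = (\<integral>\<^sup>+x. ennreal (Psi x) + ennreal (Psi (- x)) \<partial>lborel)"
    using Psi_nonneg by (intro nn_integral_cong) (simp add: Phi_def ennreal_plus)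
  also have "\<dots> = (\<integral>\<^sup>+x. ennreal (Psi x) \<partial>lborel) + (\<integral>\<^sup>+x. ennreal (Psi (- x)) \<partial>lborel)"
    by (rule nn_integral_add) auto
  also have "(\<integral>\<^sup>+x. ennreal (Psi (- x)) \<partial>lborel) = (\<integral>\<^sup>+x. ennreal (Psi x) \<partial>lborel)"
    by (rule nn_integral_lborel_uminus) measurable
  finally show ?thesis
    using nn_integral_Psi q_nonneg by (simp add: ennreal_plus[symmetric] del: ennreal_plus)
qed

lemma nn_integral_Psi_power2_finite: "(\<integral>\<^sup>+x. ennreal ((Psi x)\<^sup>2) \<partial>lborel) < \<infinity>"
proof -
  define E where "E d x = ennreal (exp (- (2 * mu) * x) * pospow (x - d) ((2 * alpha - 1) - 1))" for d x
  have "(\<integral>\<^sup>+x. ennreal ((Psi x)\<^sup>2) \<partial>lborel) \<le> (\<integral>\<^sup>+x. ennreal (2 * A\<^sup>2) * E 0 x + ennreal (2 * B\<^sup>2) * E delta x \<partial>lborel)"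
  proof (rule nn_integral_mono)
    fix x :: real
    have pospow_sq: "(pospow y (alpha - 1))\<^sup>2 = pospow y ((2 * alpha - 1) - 1)" for y
      by (simp add: pospow_def power2_eq_square powr_add[symmetric] algebra_simps)
    have "(Psi x)\<^sup>2 = (exp (- mu * x))\<^sup>2 * (A * pospow x (alpha - 1) + B * pospow (x - delta) (alpha - 1))\<^sup>2"
      by (simp add: Psi_def G_def power_mult_distrib)
    also have "\<dots> \<le> (exp (- mu * x))\<^sup>2 * (2 * (A * pospow x (alpha - 1))\<^sup>2 + 2 * (B * pospow (x - delta) (alpha - 1))\<^sup>2)"
      by (intro mult_left_mono power2_add_le) auto
    also have "\<dots> = 2 * A\<^sup>2 * (exp (- (2 * mu) * x) * pospow (x - 0) ((2 * alpha - 1) - 1))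
      + 2 * B\<^sup>2 * (exp (- (2 * mu) * x) * pospow (x - delta) ((2 * alpha - 1) - 1))"
    proof -
      have "(exp (- mu * x))\<^sup>2 = exp (- (2 * mu) * x)"
        by (simp add: power2_eq_square exp_add[symmetric])
      then show ?thesis
        by (simp add: power_mult_distrib pospow_sq algebra_simps)
    qed
    finally have "(Psi x)\<^sup>2 \<le> \<dots>" .
    then show "ennreal ((Psi x)\<^sup>2) \<le> ennreal (2 * A\<^sup>2) * E 0 x + ennreal (2 * B\<^sup>2) * E delta x"
      unfolding E_def
      by (subst (1 2) ennreal_mult[symmetric])
        (auto simp: pospow_nonneg ennreal_plus[symmetric] simp del: ennreal_plus intro!: ennreal_leI)
  qed
  also have "\<dots> = ennreal (2 * A\<^sup>2) * (\<integral>\<^sup>+x. E 0 x \<partial>lborel) + ennreal (2 * B\<^sup>2) * (\<integral>\<^sup>+x. E delta x \<partial>lborel)"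
    unfolding E_def by (subst nn_integral_add) (auto simp: nn_integral_cmult)
  also have "\<dots> < \<infinity>"
    using alpha(1) mu unfolding E_def
    by (simp only: nn_integral_exp_pospow[of "2 * mu" "2 * alpha - 1" 0] nn_integral_exp_pospow[OF _ _ delta])
      (simp_all add: ennreal_mult_less_top)
  finally show ?thesis .
qed

lemma nn_integral_Phi_power2_finite: "(\<integral>\<^sup>+x. ennreal ((Phi x)\<^sup>2) \<partial>lborel) < \<infinity>"
proof -
  have "(\<integral>\<^sup>+x. ennreal ((Phi x)\<^sup>2) \<partial>lborel)
      \<le> (\<integral>\<^sup>+x. ennreal 2 * ennreal ((Psi x)\<^sup>2) + ennreal 2 * ennreal ((Psi (- x))\<^sup>2) \<partial>lborel)"
  proof (rule nn_integral_mono)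
    fix x
    have "ennreal ((Phi x)\<^sup>2) \<le> ennreal (2 * (Psi x)\<^sup>2 + 2 * (Psi (- x))\<^sup>2)"
      unfolding Phi_def by (rule ennreal_leI) (rule power2_add_le)
    then show "ennreal ((Phi x)\<^sup>2) \<le> ennreal 2 * ennreal ((Psi x)\<^sup>2) + ennreal 2 * ennreal ((Psi (- x))\<^sup>2)"
      by (subst (asm) ennreal_plus) (auto simp: ennreal_mult)
  qed
  also have "\<dots> = ennreal 2 * (\<integral>\<^sup>+x. ennreal ((Psi x)\<^sup>2) \<partial>lborel) + ennreal 2 * (\<integral>\<^sup>+x. ennreal ((Psi (- x))\<^sup>2) \<partial>lborel)"
    by (subst nn_integral_add) (auto simp: nn_integral_cmult)
  also have "(\<integral>\<^sup>+x. ennreal ((Psi (- x))\<^sup>2) \<partial>lborel) = (\<integral>\<^sup>+x. ennreal ((Psi x)\<^sup>2) \<partial>lborel)"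
    by (rule nn_integral_lborel_uminus[of "\<lambda>x. ennreal ((Psi x)\<^sup>2)"]) measurable
  also have "ennreal 2 * (\<integral>\<^sup>+x. ennreal ((Psi x)\<^sup>2) \<partial>lborel) + ennreal 2 * (\<integral>\<^sup>+x. ennreal ((Psi x)\<^sup>2) \<partial>lborel) < \<infinity>"
    using nn_integral_Psi_power2_finite by (simp add: ennreal_mult_less_top)
  finally show ?thesis .
qed

lemma P_eq: "(\<integral>\<^sup>+x. ennreal ((Phi x)\<^sup>2) \<partial>lborel) = ennreal P"
  unfolding P_def using nn_integral_Phi_power2_finite by (simp add: ennreal_enn2real less_top)

lemma P_nonneg: "P \<ge> 0"
  unfolding P_def by simp

lemma contraction_kernel_K: "q < 1 \<Longrightarrow> contraction_kernel K q P"
proof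
  show "kernel_measurable K" "0 \<le> q" "0 \<le> P"
    by (fact kernel_measurable_K q_nonneg P_nonneg)+
  fix t s :: real
  have row: "ennreal \<bar>K t \<theta>\<bar> \<le> ennreal (Phi (t - \<theta>))" "ennreal ((K t \<theta>)\<^sup>2) \<le> ennreal ((Phi (t - \<theta>))\<^sup>2)"
    if "\<theta> \<noteq> t" for \<theta>
    using abs_K_le_Phi[of t \<theta>] power2_K_le_Phi[of t \<theta>] that by (auto intro: ennreal_leI)
  have col: "ennreal \<bar>K \<theta> s\<bar> \<le> ennreal (Phi (\<theta> - s))" "ennreal ((K \<theta> s)\<^sup>2) \<le> ennreal ((Phi (\<theta> - s))\<^sup>2)"
    if "\<theta> \<noteq> s" for \<theta>
    using abs_K_le_Phi[of \<theta> s] power2_K_le_Phi[of \<theta> s] that by (auto intro: ennreal_leI)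
  show "(\<integral>\<^sup>+\<theta>. ennreal \<bar>K t \<theta>\<bar> \<partial>M0) \<le> ennreal q"
    using nn_integral_M0_le_reflect[where H = "\<lambda>x. ennreal (Phi x)", OF _ row(1)] nn_integral_Phi by simp
  show "(\<integral>\<^sup>+\<theta>. ennreal ((K t \<theta>)\<^sup>2) \<partial>M0) \<le> ennreal P"
    using nn_integral_M0_le_reflect[where H = "\<lambda>x. ennreal ((Phi x)\<^sup>2)", OF _ row(2)] P_eq by simp
  show "(\<integral>\<^sup>+\<theta>. ennreal \<bar>K \<theta> s\<bar> \<partial>M0) \<le> ennreal q"
    using nn_integral_M0_le_shift[where H = "\<lambda>x. ennreal (Phi x)", OF _ col(1)] nn_integral_Phi by simp
  show "(\<integral>\<^sup>+\<theta>. ennreal ((K \<theta> s)\<^sup>2) \<partial>M0) \<le> ennreal P"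
    using nn_integral_M0_le_shift[where H = "\<lambda>x. ennreal ((Phi x)\<^sup>2)", OF _ col(2)] P_eq by simp
qed

end

lemma rho_alpha_equation_strict_decreasing:
  fixes b alpha delta r r' :: real
  assumes "b \<noteq> 0" "alpha > 0" "delta \<ge> 0" "0 < r" "r < r'"
  shows "\<bar>b\<bar> * (1 + exp (- r' * delta)) * r' powr (- alpha) < \<bar>b\<bar> * (1 + exp (- r * delta)) * r powr (- alpha)"
proof -
  have "exp (- r' * delta) \<le> exp (- r * delta)"
    using assms by (simp add: mult_right_mono)
  then have "\<bar>b\<bar> * (1 + exp (- r' * delta)) * r' powr (- alpha) \<le> \<bar>b\<bar> * (1 + exp (- r * delta)) * r' powr (- alpha)"
    by (intro mult_right_mono mult_left_mono) auto
  also have "\<dots> < \<bar>b\<bar> * (1 + exp (- r * delta)) * r powr (- alpha)"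
    using assms by (intro mult_strict_left_mono powr_less_mono2_neg) (auto simp: add_pos_pos)
  finally show ?thesis .
qed

lemma ex_rho_alpha_equation:
  fixes b alpha delta :: real
  assumes "b \<noteq> 0" "alpha > 0" "delta \<ge> 0"
  shows "\<exists>r>0. \<bar>b\<bar> * (1 + exp (- r * delta)) * r powr (- alpha) = 1"
proof -
  define h where "h r = \<bar>b\<bar> * (1 + exp (- r * delta)) * r powr (- alpha)" for r
  define r1 where "r1 = \<bar>b\<bar> powr (1 / alpha)"
  define r2 where "r2 = (2 * \<bar>b\<bar>) powr (1 / alpha)"
  have "r1 > 0" "r1 \<le> r2"
    unfolding r1_def r2_def using assms by (auto intro: powr_mono2)
  have "1 \<le> h r1"
    unfolding h_def r1_def using assms by (simp add: powr_powr powr_minus_divide)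
  moreover have "h r2 \<le> 1"
  proof -
    have "exp (- r2 * delta) \<le> 1"
      using \<open>r1 > 0\<close> \<open>r1 \<le> r2\<close> assms(3) by simp
    moreover have "2 * h r2 = 1 + exp (- r2 * delta)"
      unfolding h_def r2_def using assms by (simp add: powr_powr powr_minus_divide)
    ultimately show ?thesis
      by linarith
  qed
  moreover have "continuous_on {r1..r2} h"
    unfolding h_def using \<open>r1 > 0\<close> by (intro continuous_intros) auto
  ultimately obtain r where "r1 \<le> r" "h r = 1"
    using IVT2'[of h r2 1 r1] \<open>r1 \<le> r2\<close> by auto
  with \<open>r1 > 0\<close> show ?thesis
    unfolding h_def by (intro exI[of _ r]) auto
qed

lemma ex1_rho_alpha_equation:
  fixes b alpha delta :: real
  assumes "b \<noteq> 0" "alpha > 0" "delta \<ge> 0"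
  shows "\<exists>!r. r > 0 \<and> \<bar>b\<bar> * (1 + exp (- r * delta)) * r powr (- alpha) = 1"
proof -
  obtain x where x: "x > 0" "\<bar>b\<bar> * (1 + exp (- x * delta)) * x powr (- alpha) = 1"
    using ex_rho_alpha_equation[OF assms] by blast
  show ?thesis
  proof (rule ex1I[of _ x])
    fix y
    assume y: "y > 0 \<and> \<bar>b\<bar> * (1 + exp (- y * delta)) * y powr (- alpha) = 1"
    show "y = x"
    proof (rule ccontr)
      assume "y \<noteq> x"
      then consider "y < x" | "x < y"
        by linarith
      then show False
        using rho_alpha_equation_strict_decreasing[OF assms, of y x]
          rho_alpha_equation_strict_decreasing[OF assms, of x y] x y
        by cases auto
    qed
  qed (use x in simp)
qed

(* rho_alpha is defined by THE, so its positivity needs the uniqueness of the root. *)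
lemma rho_alpha_nonneg:
  assumes "alpha > 0" "delta \<ge> 0"
  shows "rho_alpha b alpha delta \<ge> 0"
proof (cases "b = 0")
  case False
  from theI'[OF ex1_rho_alpha_equation[OF False assms]] show ?thesis
    using False by (simp add: rho_alpha_def)
qed (simp add: rho_alpha_def)

(* Both summands are dominated by the corresponding summands of the equation defining rt,
   which add up to 1/2. *)
lemma contraction_constant_less_1:
  fixes b c gamma alpha delta lam rt mu :: real
  assumes "c \<noteq> 0" and "gamma > 0" and "1/2 < alpha"
    and delta: "delta \<ge> 0" and rt: "rt > 0"
    and eq: "((c^2 * gamma + b^2 * exp (- 2 * rt * delta)) * (2 * rt) powr (- alpha)
            + \<bar>b\<bar> * (1 + exp (- rt * delta))) * rt powr (- alpha) = 1/2"
    and mu: "mu > rt" and lam: "lam \<ge> 2 * mu"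
  shows "2 * (((c\<^sup>2 * gamma + b\<^sup>2 * exp (- lam * delta)) * lam powr (- alpha)
    + \<bar>b\<bar> * exp (- mu * delta)) * mu powr (- alpha)) < 1"
proof -
  define C1 where "C1 = c\<^sup>2 * gamma + b\<^sup>2 * exp (- lam * delta)"
  define C2 where "C2 = c\<^sup>2 * gamma + b\<^sup>2 * exp (- 2 * rt * delta)"
  have "C1 > 0"
    unfolding C1_def using assms(1,2) by (simp add: add_pos_nonneg)
  have "C1 \<le> C2"
    unfolding C1_def C2_def using lam mu rt delta
    by (intro add_left_mono mult_left_mono) (auto intro!: mult_right_mono)
  have lam_rt: "lam powr (- alpha) < (2 * rt) powr (- alpha)" and mu_rt: "mu powr (- alpha) < rt powr (- alpha)"
    using lam mu rt assms(3) by (auto intro!: powr_less_mono2_neg)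
  have "C1 * lam powr (- alpha) * mu powr (- alpha) \<le> C2 * lam powr (- alpha) * mu powr (- alpha)"
    using \<open>C1 \<le> C2\<close> by (intro mult_right_mono) auto
  also have "\<dots> < C2 * (2 * rt) powr (- alpha) * rt powr (- alpha)"
    using \<open>C1 > 0\<close> \<open>C1 \<le> C2\<close> lam_rt mu_rt mu rt by (intro mult_strict_mono mult_strict_left_mono) auto
  finally have first: "C1 * lam powr (- alpha) * mu powr (- alpha) < C2 * (2 * rt) powr (- alpha) * rt powr (- alpha)" .
  have "exp (- mu * delta) \<le> 1 + exp (- rt * delta)"
  proof -
    have "exp (- mu * delta) \<le> 1"
      using mu rt delta by simp
    then show ?thesis
      using exp_gt_zero[of "- rt * delta"] by linarith
  qed
  then have second: "\<bar>b\<bar> * exp (- mu * delta) * mu powr (- alpha) \<le> \<bar>b\<bar> * (1 + exp (- rt * delta)) * rt powr (- alpha)"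
    using mu_rt by (intro mult_mono mult_left_mono) auto
  have "C2 * (2 * rt) powr (- alpha) * rt powr (- alpha) + \<bar>b\<bar> * (1 + exp (- rt * delta)) * rt powr (- alpha) = 1/2"
    using eq unfolding C2_def by (simp only: distrib_right)
  with first second show ?thesis
    unfolding C1_def[symmetric] by (simp add: distrib_right)
qed

theorem lemma5p9:
  fixes b c gamma alpha delta lam rt mu :: real
  assumes "c \<noteq> 0" and "gamma > 0" and "1/2 < alpha" and "alpha \<le> 1"
    and "delta \<ge> 0" and "lam > 0"
    and "rt > rho_alpha b alpha delta"
    and "((c^2 * gamma + b^2 * exp (- 2 * rt * delta)) * (2 * rt) powr (- alpha)
            + \<bar>b\<bar> * (1 + exp (- rt * delta))) * rt powr (- alpha) = 1/2"
    and "mu > rt" and "lam \<ge> 2 * mu"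
  shows "fredholm_L2w (- mu) (k_lam b c gamma alpha delta lam)
    \<and> (\<exists>r. fredholm_resolvent_L2w (- mu) (k_lam b c gamma alpha delta lam) r
        \<and> (\<forall>r'. fredholm_resolvent_L2w (- mu) (k_lam b c gamma alpha delta lam) r'
               \<longrightarrow> (AE z in M0 \<Otimes>\<^sub>M M0. r' (fst z) (snd z) = r (fst z) (snd z)))
        \<and> (\<forall>a. Lpw 2 (- mu) a \<longrightarrow>
             (\<exists>x. Lpw 2 (- mu) x \<and> solves_fredholm (k_lam b c gamma alpha delta lam) a x
                \<and> (\<forall>y. Lpw 2 (- mu) y \<and> solves_fredholm (k_lam b c gamma alpha delta lam) a y
                        \<longrightarrow> (AE t in M0. y t = x t))
                \<and> (AE t in M0. x t = a t - (\<integral>s. r t s * a s \<partial>M0)))))"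
proof -
  have "rt > 0"
    using rho_alpha_nonneg[of alpha delta b] assms(3,5,7) by linarith
  then interpret weighted_k_lam b c gamma alpha delta lam mu
    using assms by unfold_locales auto
  have "q < 1"
    unfolding q_def C_def using contraction_constant_less_1[OF assms(1-3,5) \<open>rt > 0\<close> assms(8-10)] .
  interpret weighted_contraction_kernel K q P "- mu" "k_lam b c gamma alpha delta lam"
    using contraction_kernel_K[OF \<open>q < 1\<close>]
    by unfold_locales (simp_all add: contraction_kernel_def fun_eq_iff K_def)
  show ?thesis
    by (rule weighted_fredholm_resolvent)
qed

end
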